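(* For a word $u$ of length $n$, the seed array $\mathsf{Seed}[1..n]$, where $\mathsf{Seed}[i]$ is the length of the shortest seed of the prefix $u[1..i]$, can be computed in $O(n^2)$ time.
   Context: Words are over a finite alphabet. A word $s$ covers $w$ if every position of $w$ lies in some occurrence of $s$ as a factor of $w$. A seed of a word $x$ is a factor $s$ of $x$ such that $x$ is a factor of some word covered by $s$. *)

theory Defs
  imports Main "HOL-Library.Sublist"
begin

text \<open>Positions are 0-based here; an occurrence of s in w starts at position i.\<close>

definition occurs_at :: "'a list \<Rightarrow> 'a list \<Rightarrow> nat \<Rightarrow> bool" where
  "occurs_at s w i \<longleftrightarrow> i + length s \<le> length w \<and> take (length s) (drop i w) = s"

definition covers :: "'a list \<Rightarrow> 'a list \<Rightarrow> bool" where
  "covers s w \<longleftrightarrow> (\<forall>j < length w. \<exists>i. occurs_at s w i \<and> i \<le> j \<and> j < i + length s)"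

definition is_seed :: "'a list \<Rightarrow> 'a list \<Rightarrow> bool" where
  "is_seed s x \<longleftrightarrow> sublist s x \<and> (\<exists>w. covers s w \<and> sublist x w)"

definition shortest_seed_len :: "'a list \<Rightarrow> nat" where
  "shortest_seed_len x = (LEAST l. \<exists>s. length s = l \<and> is_seed s x)"

definition seed_array :: "'a list \<Rightarrow> nat \<Rightarrow> nat" where
  "seed_array u i = shortest_seed_len (take i u)"

type_synonym vname = string
type_synonym aname = string

datatype aexp =
    N int
  | V vname
  | Arr aname aexp
  | Plus aexp aexp
  | Minus aexp aexp

datatype bexp =
    Bc bool
  | Not bexp
  | And bexp bexp
  | Less aexp aexp
  | Eq aexp aexp

datatype com =
    SKIP
  | Assign vname aexp
  | ArrAssign aname aexp aexp
  | Seq com com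
  | If bexp com com
  | While bexp com

record state =
  vars :: "vname \<Rightarrow> int"
  arrs :: "aname \<Rightarrow> int \<Rightarrow> int"

fun aval :: "aexp \<Rightarrow> state \<Rightarrow> int" where
  "aval (N k) s = k"
| "aval (V x) s = vars s x"
| "aval (Arr a e) s = arrs s a (aval e s)"
| "aval (Plus e1 e2) s = aval e1 s + aval e2 s"
| "aval (Minus e1 e2) s = aval e1 s - aval e2 s"

fun bval :: "bexp \<Rightarrow> state \<Rightarrow> bool" where
  "bval (Bc b) s = b"
| "bval (Not b) s = (\<not> bval b s)"
| "bval (And b1 b2) s = (bval b1 s \<and> bval b2 s)"
| "bval (Less e1 e2) s = (aval e1 s < aval e2 s)"
| "bval (Eq e1 e2) s = (aval e1 s = aval e2 s)"

text \<open>Big-step semantics with running time: every atomic command and every test costs one unit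
  (expressions are of constant size for a fixed program).\<close>
inductive big_step :: "com \<Rightarrow> state \<Rightarrow> nat \<Rightarrow> state \<Rightarrow> bool" where
  Skip: "big_step SKIP s 1 s"
| Assign: "big_step (Assign x e) s 1 (s\<lparr>vars := (vars s)(x := aval e s)\<rparr>)"
| ArrAssign: "big_step (ArrAssign a i e) s 1
     (s\<lparr>arrs := (arrs s)(a := (arrs s a)(aval i s := aval e s))\<rparr>)"
| Seq: "big_step c1 s1 t1 s2 \<Longrightarrow> big_step c2 s2 t2 s3 \<Longrightarrow> big_step (Seq c1 c2) s1 (t1 + t2) s3"
| IfTrue: "bval b s \<Longrightarrow> big_step c1 s t s' \<Longrightarrow> big_step (If b c1 c2) s (t + 1) s'"
| IfFalse: "\<not> bval b s \<Longrightarrow> big_step c2 s t s' \<Longrightarrow> big_step (If b c1 c2) s (t + 1) s'"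
| WhileFalse: "\<not> bval b s \<Longrightarrow> big_step (While b c) s 1 s"
| WhileTrue: "bval b s1 \<Longrightarrow> big_step c s1 t1 s2 \<Longrightarrow> big_step (While b c) s2 t2 s3 \<Longrightarrow>
     big_step (While b c) s1 (t1 + t2 + 1) s3"

text \<open>Initial configuration for input word u (letters are integers): register ''n'' holds |u|,
  array ''u'' holds u[1..n] at indices 1..n; everything else is 0.\<close>
definition init_state :: "int list \<Rightarrow> state" where
  "init_state u = \<lparr>vars = (\<lambda>_. 0)(''n'' := int (length u)),
     arrs = (\<lambda>_ _. 0)(''u'' := (\<lambda>i. if 1 \<le> i \<and> i \<le> int (length u) then u ! nat (i - 1) else 0))\<rparr>"

end

(*
  A word s of length l is a seed of the prefix x = u[0..i) iff, with j the last occurrence of s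
  in x, every position before j lies in a fit of s (a copy of s that agrees with u where they
  overlap, possibly hanging over the left end of u) and u[j..i) has a period r - j with
  j < r \<le> j + l, that is i \<le> r + lce(r, j). Coverage before j obeys a recurrence in j: either
  a single overhanging fit covers everything, which is a border condition on lce(0, d), or the
  fit covering j - 1 can be moved to the last earlier occurrence k of s, which must satisfy
  j < k + l and be covered itself. The lce table, the best border and period reaches, and the
  last earlier occurrences are all computed in O(n^2) time by dynamic programming; then for
  every length l one sweep over j decides coverage and the existence of a seed of length l for
  the prefix of length j + l in constant time per step.
*)

theory Submission
  imports Defs
begin

section \<open>Longest common extensions\<close>

function lce :: "'a list \<Rightarrow> nat \<Rightarrow> nat \<Rightarrow> nat" where
  "lce u a b = (if a < length u \<and> b < length u \<and> u ! a = u ! b then Suc (lce u (Suc a) (Suc b)) else 0)"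
  by pat_completeness auto
termination by (relation "measure (\<lambda>(u, a, b). length u - a)") auto

declare lce.simps [simp del]

lemma le_lce_iff:
  "m \<le> lce u a b \<longleftrightarrow> (\<forall>t<m. a + t < length u \<and> b + t < length u \<and> u ! (a + t) = u ! (b + t))"
proof (induction m arbitrary: a b)
  case 0
  then show ?case by simp
next
  case (Suc m)
  show ?case
  proof (cases "a < length u \<and> b < length u \<and> u ! a = u ! b")
    case True
    then have "(\<forall>t<Suc m. a + t < length u \<and> b + t < length u \<and> u ! (a + t) = u ! (b + t)) \<longleftrightarrow>
        (\<forall>t<m. Suc a + t < length u \<and> Suc b + t < length u \<and> u ! (Suc a + t) = u ! (Suc b + t))"
      by (auto simp: less_Suc_eq_0_disj)
    with True Suc.IH show ?thesis by (simp add: lce.simps[of u a b])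
  next
    case False
    then show ?thesis by (simp add: lce.simps[of u a b]) (metis add_0_right zero_less_Suc)
  qed
qed

lemma lce_le_length: "lce u a b \<le> length u - b"
  using le_lce_iff[of "lce u a b" u a b] by (cases "lce u a b") auto

lemma nth_eq_if_le_lce: "l \<le> lce u a b \<Longrightarrow> t < l \<Longrightarrow> u ! (a + t) = u ! (b + t)"
  by (auto simp: le_lce_iff)

lemma factor_eq_if_le_lce:
  assumes "l \<le> lce u a b"
  shows "take l (drop a u) = take l (drop b u)"
proof (cases "l = 0")
  case False
  then have "l - 1 < l" by simp
  then have "a + (l - 1) < length u \<and> b + (l - 1) < length u"
    using assms unfolding le_lce_iff by blast
  then have "a + l \<le> length u" "b + l \<le> length u" using False by auto
  with assms show ?thesis by (intro nth_equalityI) (auto simp: le_lce_iff)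
qed simp

section \<open>Seeds via fits\<close>

text \<open>The offset q may be negative and s may run past the end of x: only the overlap of s
  and x is compared.\<close>
definition fits_at :: "'a list \<Rightarrow> 'a list \<Rightarrow> int \<Rightarrow> bool" where
  "fits_at s x q \<longleftrightarrow> (\<forall>p<length x. \<forall>t<length s. int p = q + int t \<longrightarrow> x ! p = s ! t)"

definition fit_covers_upto :: "'a list \<Rightarrow> 'a list \<Rightarrow> nat \<Rightarrow> bool" where
  "fit_covers_upto s x j \<longleftrightarrow>
     (\<forall>p<j. \<exists>q. q \<le> int p \<and> int p < q + int (length s) \<and> fits_at s x q)"

lemma all_nth_append_iff:
  "(\<forall>p<length (y @ z). P p ((y @ z) ! p)) \<longleftrightarrow>
    (\<forall>p<length y. P p (y ! p)) \<and> (\<forall>p<length z. P (length y + p) (z ! p))"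
proof (intro iffI conjI allI impI)
  fix p assume "\<forall>p<length (y @ z). P p ((y @ z) ! p)" "p < length z"
  then show "P (length y + p) (z ! p)" by (metis length_append nat_add_left_cancel_less nth_append_length_plus)
next
  fix p assume H: "(\<forall>p<length y. P p (y ! p)) \<and> (\<forall>p<length z. P (length y + p) (z ! p))"
    and p: "p < length (y @ z)"
  show "P p ((y @ z) ! p)"
  proof (cases "p < length y")
    case False
    then have "p = length y + (p - length y)" "p - length y < length z" using p by auto
    then show ?thesis using H by (metis nth_append_length_plus)
  qed (use H in \<open>auto simp: nth_append\<close>)
next
  fix p assume "\<forall>p<length (y @ z). P p ((y @ z) ! p)" "p < length y"
  then show "P p (y ! p)" by (metis length_append nth_append trans_less_add1)
qed

lemma fits_at_append:
  "fits_at s (y @ z) q \<longleftrightarrow> fits_at s y q \<and> fits_at s z (q - int (length y))"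
  using all_nth_append_iff[of y z "\<lambda>p c. \<forall>t<length s. int p = q + int t \<longrightarrow> c = s ! t"]
  unfolding fits_at_def by (simp add: algebra_simps)

lemma fits_at_disjoint: "int (length x) \<le> q \<or> q + int (length s) \<le> 0 \<Longrightarrow> fits_at s x q"
  by (auto simp: fits_at_def)

lemma fits_at_take_self: "fits_at s (take k s) 0"
  by (auto simp: fits_at_def)

lemma fits_at_drop_self: "fits_at s (drop k s) (- int k)"
  unfolding fits_at_def
proof (intro allI impI)
  fix p t assume "p < length (drop k s)" "t < length s" "int p = - int k + int t"
  then have "t = k + p" by linarith
  then show "drop k s ! p = s ! t" using \<open>t < length s\<close> by simp
qed

lemma occurs_at_iff_fits_at:
  "occurs_at s w k \<longleftrightarrow> k + length s \<le> length w \<and> fits_at s w (int k)"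
proof -
  have "fits_at s w (int k) \<longleftrightarrow> (\<forall>t<length s. w ! (k + t) = s ! t)"
    if "k + length s \<le> length w"
  proof -
    have "int p = int k + int t \<longleftrightarrow> p = k + t" for p t by linarith
    show ?thesis unfolding fits_at_def
    proof (intro iffI allI impI)
      fix t assume "\<forall>p<length w. \<forall>t<length s. int p = int k + int t \<longrightarrow> w ! p = s ! t" "t < length s"
      moreover have "k + t < length w" using that \<open>t < length s\<close> by simp
      ultimately show "w ! (k + t) = s ! t" by simp
    qed (use \<open>\<And>p t. int p = int k + int t \<longleftrightarrow> p = k + t\<close> in auto)
  qed
  moreover have "take (length s) (drop k w) = s \<longleftrightarrow> (\<forall>t<length s. w ! (k + t) = s ! t)"
    if "k + length s \<le> length w"
    using that by (auto simp: list_eq_iff_nth_eq)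
  ultimately show ?thesis unfolding occurs_at_def by auto
qed

lemma covered_superword_imp_fit_covers:
  assumes "covers s w" and "sublist x w"
  shows "fit_covers_upto s x (length x)"
  unfolding fit_covers_upto_def
proof (intro allI impI)
  fix p assume p: "p < length x"
  obtain ps ss where w: "w = ps @ x @ ss" using \<open>sublist x w\<close> by (auto simp: sublist_def)
  then have "length ps + p < length w" using p by simp
  then obtain k where "occurs_at s w k" "k \<le> length ps + p" "length ps + p < k + length s"
    using \<open>covers s w\<close> unfolding covers_def by blast
  moreover from this have "fits_at s x (int k - int (length ps))"
    unfolding occurs_at_iff_fits_at w by (simp add: fits_at_append)
  ultimately show "\<exists>q. q \<le> int p \<and> int p < q + int (length s) \<and> fits_at s x q"
    by (intro exI[of _ "int k - int (length ps)"]) auto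
qed

lemma occurs_at_append3_iff:
  "occurs_at s (y @ x @ z) k \<longleftrightarrow> k + length s \<le> length y + length x + length z \<and>
    fits_at s y (int k) \<and> fits_at s x (int k - int (length y)) \<and>
    fits_at s z (int k - int (length y) - int (length x))"
  by (simp add: occurs_at_iff_fits_at fits_at_append add.assoc)

lemma outermost_left_fit:
  assumes "fit_covers_upto s x (length x)" and "x \<noteq> []"
  obtains a where "a < length s" "fits_at s x (- int a)"
    "\<And>q. fits_at s x q \<Longrightarrow> q < 0 \<Longrightarrow> 0 < q + int (length s) \<Longrightarrow> q \<le> - int a"
proof -
  define A where "A = (\<lambda>a. a < length s \<and> fits_at s x (- int a))"
  have A_fit: "A (nat (- q))" if "fits_at s x q" "q \<le> 0" "0 < q + int (length s)" for q
    using that unfolding A_def by auto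
  obtain q where "q \<le> 0" "0 < q + int (length s)" "fits_at s x q"
    using assms unfolding fit_covers_upto_def by fastforce
  then have A: "A (LEAST a. A a)" using A_fit by (auto intro: LeastI)
  show ?thesis
  proof (rule that)
    show "(LEAST a. A a) < length s" "fits_at s x (- int (LEAST a. A a))" using A unfolding A_def by auto
    fix q assume "fits_at s x q" "q < 0" "0 < q + int (length s)"
    then have "(LEAST a. A a) \<le> nat (- q)" using A_fit by (auto intro: Least_le)
    then show "q \<le> - int (LEAST a. A a)" using \<open>q < 0\<close> by linarith
  qed
qed

lemma outermost_right_fit:
  assumes "fit_covers_upto s x (length x)" and "x \<noteq> []"
  obtains b where "b < length s" "fits_at s x (int (length x) - int (length s) + int b)"
    "\<And>q. fits_at s x q \<Longrightarrow> q < int (length x) \<Longrightarrow> int (length x) < q + int (length s) \<Longrightarrow>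
      int (length x) - int (length s) + int b \<le> q"
proof -
  define B where "B = (\<lambda>b. b < length s \<and> fits_at s x (int (length x) - int (length s) + int b))"
  have B_fit: "B (nat (q - (int (length x) - int (length s))))"
    if "fits_at s x q" "q < int (length x)" "int (length x) \<le> q + int (length s)" for q
    using that unfolding B_def by auto
  have "length x - 1 < length x" using assms(2) by simp
  then obtain q where "q \<le> int (length x - 1)" "int (length x - 1) < q + int (length s)" "fits_at s x q"
    using assms(1) unfolding fit_covers_upto_def by blast
  moreover have "int (length x - 1) = int (length x) - 1" using assms(2) by (cases x) auto
  moreover from calculation have "q < int (length x)" "int (length x) \<le> q + int (length s)" by linarith+
  ultimately have B: "B (LEAST b. B b)" using B_fit by (auto intro: LeastI)
  show ?thesis
  proof (rule that)
    show "(LEAST b. B b) < length s" "fits_at s x (int (length x) - int (length s) + int (LEAST b. B b))"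
      using B unfolding B_def by auto
    fix q assume "fits_at s x q" "q < int (length x)" "int (length x) < q + int (length s)"
    then have "(LEAST b. B b) \<le> nat (q - (int (length x) - int (length s)))" using B_fit by (auto intro: Least_le)
    then show "int (length x) - int (length s) + int (LEAST b. B b) \<le> q"
      using \<open>int (length x) < q + int (length s)\<close> by linarith
  qed
qed

lemma padded_word_occurrences:
  assumes lX: "length s \<le> length x" and a: "a < length s" "fits_at s x (- int a)"
    and b: "b < length s" "fits_at s x (int (length x) - int (length s) + int b)"
  defines "w \<equiv> take a s @ x @ drop (length s - b) s"
  shows "occurs_at s w 0" and "occurs_at s w (a + (length x - length s) + b)"
    and "\<And>q. 0 \<le> q \<Longrightarrow> q + int (length s) \<le> int (length x) \<Longrightarrow> fits_at s x q \<Longrightarrow> occurs_at s w (a + nat q)"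
proof -
  have occ: "occurs_at s w k \<longleftrightarrow> k + length s \<le> a + length x + b \<and> fits_at s (take a s) (int k) \<and>
      fits_at s x (int k - int a) \<and> fits_at s (drop (length s - b) s) (int k - int a - int (length x))" for k
    using a b unfolding w_def occurs_at_append3_iff by (simp add: min_def)
  show "occurs_at s w 0"
    using a lX fits_at_take_self[of s a] unfolding occ by (auto intro!: fits_at_disjoint)
  show "occurs_at s w (a + (length x - length s) + b)"
    using a b lX fits_at_drop_self[of s "length s - b"] unfolding occ
    by (auto simp: of_nat_diff algebra_simps intro!: fits_at_disjoint)
  show "occurs_at s w (a + nat q)"
    if "0 \<le> q" "q + int (length s) \<le> int (length x)" "fits_at s x q" for q
    using that a unfolding occ by (auto intro!: fits_at_disjoint)
qed

text \<open>The covered superword pads x on both sides by the overhangs of the two outermost fits.\<close>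
lemma fit_covers_imp_covered_superword:
  assumes cov: "fit_covers_upto s x (length x)" and sx: "length s \<le> length x"
  shows "\<exists>w. covers s w \<and> sublist x w"
proof (cases "x = []")
  case True
  then show ?thesis by (intro exI[of _ "[]"]) (simp add: covers_def)
next
  case False
  define l where "l = length s"
  define X where "X = length x"
  have lX: "l \<le> X" using sx unfolding l_def X_def .
  obtain a where a: "a < l" "fits_at s x (- int a)"
    and a_max: "\<And>q. fits_at s x q \<Longrightarrow> q < 0 \<Longrightarrow> 0 < q + int l \<Longrightarrow> q \<le> - int a"
    using outermost_left_fit[OF cov False] unfolding l_def by blast
  obtain b where b: "b < l" "fits_at s x (int X - int l + int b)"
    and b_min: "\<And>q. fits_at s x q \<Longrightarrow> q < int X \<Longrightarrow> int X < q + int l \<Longrightarrow> int X - int l + int b \<le> q"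
    using outermost_right_fit[OF cov False] unfolding l_def X_def by blast
  define w where "w = take a s @ x @ drop (l - b) s"
  have lw: "length w = a + X + b" using a b unfolding w_def l_def X_def by auto
  have occ_left: "occurs_at s w 0"
    using padded_word_occurrences(1)[of s x a b] sx a b unfolding w_def l_def X_def by simp
  have occ_right: "occurs_at s w (a + (X - l) + b)"
    using padded_word_occurrences(2)[of s x a b] sx a b unfolding w_def l_def X_def by simp
  have occ_mid: "occurs_at s w (a + nat q)" if "0 \<le> q" "q + int l \<le> int X" "fits_at s x q" for q
    using padded_word_occurrences(3)[of s x a b q] sx a b that unfolding w_def l_def X_def by simp
  have "\<exists>k. occurs_at s w k \<and> k \<le> P \<and> P < k + l" if P: "P < length w" for P
  proof (cases "P < a \<or> a + X \<le> P")
    case True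
    then show ?thesis
    proof
      assume "P < a"
      then show ?thesis using occ_left a by auto
    next
      assume "a + X \<le> P"
      then show ?thesis using occ_right P lw lX b by (intro exI[of _ "a + (X - l) + b"]) auto
    qed
  next
    case False
    then have p: "P - a < X" by auto
    then obtain q where q: "q \<le> int (P - a)" "int (P - a) < q + int l" "fits_at s x q"
      using cov unfolding fit_covers_upto_def l_def X_def by blast
    consider "q < 0" | "0 \<le> q" "q + int l \<le> int X" | "int X < q + int l" by linarith
    then show ?thesis
    proof cases
      case 1
      then have "q \<le> - int a" using a_max q by simp
      then show ?thesis using occ_left q False by (intro exI[of _ 0]) auto
    next
      case 2
      then show ?thesis using occ_mid[OF 2 q(3)] q False by (intro exI[of _ "a + nat q"]) auto
    next
      case 3
      then have "int X - int l + int b \<le> q" using b_min q p by simp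
      then show ?thesis using occ_right q p lX False by (intro exI[of _ "a + (X - l) + b"]) auto
    qed
  qed
  then have "covers s w" unfolding covers_def l_def by blast
  moreover have "sublist x w" unfolding w_def by (metis sublist_appendI)
  ultimately show ?thesis by blast
qed

lemma is_seed_iff_fit_covers:
  "is_seed s x \<longleftrightarrow> sublist s x \<and> fit_covers_upto s x (length x)"
  using covered_superword_imp_fit_covers fit_covers_imp_covered_superword sublist_length_le
  unfolding is_seed_def by metis

section \<open>Seeds of prefixes\<close>

lemma fits_at_take_iff:
  assumes "q + int (length s) \<le> int i"
  shows "fits_at s (take i u) q \<longleftrightarrow> fits_at s u q"
proof (cases "i \<le> length u")
  case True
  have "fits_at s (drop i u) (q - int (length (take i u)))"
    using assms True by (intro fits_at_disjoint) simp
  then show ?thesis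
    using fits_at_append[of s "take i u" "drop i u" q] by simp
qed simp

lemma fits_at_factor_iff:
  assumes "j + l \<le> length u"
  shows "fits_at (take l (drop j u)) u q \<longleftrightarrow>
    (\<forall>t<l. 0 \<le> q + int t \<longrightarrow> q + int t < int (length u) \<longrightarrow> u ! nat (q + int t) = u ! (j + t))"
  using assms unfolding fits_at_def
proof (auto simp: add.commute)
  fix p t assume "\<forall>t<l. 0 \<le> q + int t \<longrightarrow> q + int t < int (length u) \<longrightarrow> u ! nat (q + int t) = u ! (t + j)"
    "p < length u" "t < l" "int p = q + int t"
  then show "u ! p = u ! (t + j)" by (metis nat_int of_nat_0_le_iff of_nat_less_iff)
qed

lemma fits_at_factor_iff_le_lce:
  assumes "j + l \<le> length u" and "k + l \<le> length u"
  shows "fits_at (take l (drop j u)) u (int k) \<longleftrightarrow> l \<le> lce u k j"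
  using assms by (auto simp: fits_at_factor_iff le_lce_iff nat_int_add)

lemma fit_covers_upto_mono: "fit_covers_upto s x j \<Longrightarrow> k \<le> j \<Longrightarrow> fit_covers_upto s x k"
  unfolding fit_covers_upto_def by auto

lemma periodic_nth:
  assumes "\<And>y. j \<le> y \<Longrightarrow> y + d < n \<Longrightarrow> u ! (y + d) = u ! y"
  shows "j \<le> y \<Longrightarrow> y + m * d < n \<Longrightarrow> u ! (y + m * d) = u ! y"
proof (induction m)
  case (Suc m)
  then have "u ! (y + m * d + d) = u ! (y + m * d)" using assms[of "y + m * d"] by (simp add: algebra_simps)
  then show ?case using Suc by (simp add: algebra_simps)
qed simp

definition has_seed_of_length :: "'a list \<Rightarrow> nat \<Rightarrow> bool" where
  "has_seed_of_length x l \<longleftrightarrow> (\<exists>s. length s = l \<and> is_seed s x)"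

definition left_covered :: "'a list \<Rightarrow> nat \<Rightarrow> nat \<Rightarrow> bool" where
  "left_covered u j l \<longleftrightarrow> fit_covers_upto (take l (drop j u)) u j"

text \<open>The factor of length l at j is the last occurrence of a seed of the prefix of length i,
  and r - j is a period of the remainder of the prefix.\<close>
definition seed_witness :: "'a list \<Rightarrow> nat \<Rightarrow> nat \<Rightarrow> nat \<Rightarrow> bool" where
  "seed_witness u i l j \<longleftrightarrow>
     j + l \<le> i \<and> left_covered u j l \<and> (\<exists>r. j < r \<and> r \<le> j + l \<and> i \<le> r + lce u r j)"

lemma take_drop_take: "j + l \<le> i \<Longrightarrow> take l (drop j (take i u)) = take l (drop j u)"
  by (simp add: drop_take min_def)

lemma last_occurrence_in_prefix:
  assumes "sublist s (take i u)" and "i \<le> length u"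
  obtains j where "j + length s \<le> i" "take (length s) (drop j u) = s"
    "\<And>k. k + length s \<le> i \<Longrightarrow> take (length s) (drop k u) = s \<Longrightarrow> k \<le> j"
proof -
  define J where "J = (\<lambda>j. j + length s \<le> i \<and> take (length s) (drop j u) = s)"
  obtain ps ss where "take i u = ps @ s @ ss" using assms(1) unfolding sublist_def by blast
  then have "length ps + length s \<le> i" "take (length s) (drop (length ps) (take i u)) = s"
    using assms(2) by (auto dest: arg_cong[of _ _ length])
  then have "J (length ps)" using take_drop_take[of "length ps" "length s" i u] unfolding J_def by simp
  moreover have "\<And>j. J j \<Longrightarrow> j \<le> i" unfolding J_def by simp
  ultimately show ?thesis using that GreatestI_nat[of J] Greatest_le_nat[of J] unfolding J_def by blast
qed

text \<open>A fit of the factor at r after its last occurrence j within the prefix must run over the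
  end of the prefix; so the prefix has period r - j from j on.\<close>
lemma fit_after_last_occurrence:
  assumes iu: "i \<le> length u" and ji: "j + l \<le> i" and jr: "j < r"
    and fit: "fits_at (take l (drop j u)) (take i u) (int r)"
    and last: "\<And>k. k + l \<le> i \<Longrightarrow> take l (drop k u) = take l (drop j u) \<Longrightarrow> k \<le> j"
  shows "i \<le> r + lce u r j"
proof -
  define x where "x = take i u"
  have lx: "length x = i" using iu unfolding x_def by simp
  have "fits_at (take l (drop j x)) x (int r)" using fit unfolding x_def take_drop_take[OF ji] .
  then have "\<forall>t<l. 0 \<le> int r + int t \<longrightarrow> int r + int t < int i \<longrightarrow> x ! nat (int r + int t) = x ! (j + t)"
    using fits_at_factor_iff[of j l x "int r"] ji lx by simp
  then have per: "\<And>t. t < l \<Longrightarrow> r + t < i \<Longrightarrow> u ! (r + t) = u ! (j + t)"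
    using ji unfolding x_def by (simp add: nat_int_add)
  have "i < r + l"
  proof (rule ccontr)
    assume "\<not> i < r + l"
    then have "l \<le> lce u r j" using per iu ji jr unfolding le_lce_iff by auto
    then have "take l (drop r u) = take l (drop j u)" by (rule factor_eq_if_le_lce)
    then have "r \<le> j" using last \<open>\<not> i < r + l\<close> by simp
    then show False using jr by simp
  qed
  then have "i - r \<le> lce u r j" using per iu jr ji unfolding le_lce_iff by auto
  then show ?thesis by simp
qed

lemma seed_of_prefix_imp_witness:
  assumes iu: "i \<le> length u" and i0: "0 < i" and seed: "is_seed s (take i u)"
  shows "0 < length s \<and> (\<exists>j. seed_witness u i (length s) j)"
proof -
  define x where "x = take i u"
  define l where "l = length s"
  have lx: "length x = i" using iu unfolding x_def by simp
  have fit: "\<exists>q. q \<le> int p \<and> int p < q + int l \<and> fits_at s x q" if "p < i" for p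
    using seed that lx unfolding is_seed_iff_fit_covers fit_covers_upto_def x_def l_def by auto
  have l0: "0 < l" using fit[OF i0] by auto
  obtain j where ji: "j + l \<le> i" and sj: "s = take l (drop j u)"
    and j_max: "\<And>k. k + l \<le> i \<Longrightarrow> take l (drop k u) = s \<Longrightarrow> k \<le> j"
    using last_occurrence_in_prefix[OF _ iu] seed unfolding is_seed_def l_def by metis
  have "left_covered u j l" unfolding left_covered_def fit_covers_upto_def
  proof (intro allI impI)
    fix p assume "p < j"
    then have "p < i" using ji by simp
    then obtain q where "q \<le> int p" "int p < q + int l" "fits_at s x q" using fit by blast
    moreover have "q + int (length s) \<le> int i" using calculation \<open>p < j\<close> ji unfolding l_def by linarith
    then have "fits_at s u q" using \<open>fits_at s x q\<close> fits_at_take_iff unfolding x_def by blast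
    ultimately show "\<exists>q. q \<le> int p \<and> int p < q + int (length (take l (drop j u))) \<and>
        fits_at (take l (drop j u)) u q"
      using sj l_def by metis
  qed
  moreover have "\<exists>r. j < r \<and> r \<le> j + l \<and> i \<le> r + lce u r j"
  proof (cases "i \<le> j + l")
    case True
    then show ?thesis using l0 by (intro exI[of _ "j + l"]) auto
  next
    case False
    then have "j + l < i" by simp
    then obtain q where q: "q \<le> int (j + l)" "int (j + l) < q + int l" "fits_at s x q"
      using fit by blast
    define r where "r = nat q"
    have r: "q = int r" "j < r" "r \<le> j + l" using q unfolding r_def by auto
    have "i \<le> r + lce u r j"
      using fit_after_last_occurrence[OF iu ji r(2)] q(3) j_max sj unfolding r(1) x_def by blast
    then show ?thesis using r by (intro exI[of _ r]) auto
  qed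
  ultimately show ?thesis using l0 ji unfolding seed_witness_def l_def by blast
qed

text \<open>Positions after j are covered by shifting the occurrence at j by multiples of the
  period r - j.\<close>
lemma periodic_tail_fit:
  assumes iu: "i \<le> length u" and ji: "j + l \<le> i" and r: "j < r" "r \<le> j + l" "i \<le> r + lce u r j"
    and p: "j \<le> p" "p < i"
  shows "\<exists>q. q \<le> int p \<and> int p < q + int l \<and> fits_at (take l (drop j u)) (take i u) q"
proof -
  define x where "x = take i u"
  have lx: "length x = i" using iu unfolding x_def by simp
  define d where "d = r - j"
  have d: "0 < d" "d \<le> l" using r unfolding d_def by auto
  have per: "u ! (y + d) = u ! y" if "j \<le> y" "y + d < i" for y
  proof -
    have "Suc (y - j) \<le> lce u r j" using that r unfolding d_def by linarith
    then have "u ! (r + (y - j)) = u ! (j + (y - j))" by (rule nth_eq_if_le_lce) simp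
    then show ?thesis using that r unfolding d_def by (simp add: algebra_simps)
  qed
  define q where "q = j + (p - j) div d * d"
  have "(p - j) div d * d \<le> p - j" "p - j < (p - j) div d * d + d"
    using d div_mult_mod_eq[of "p - j" d] mod_less_divisor[of d "p - j"] by linarith+
  then have qp: "q \<le> p" "p < q + l" using p d unfolding q_def by linarith+
  have "fits_at (take l (drop j x)) x (int q)"
    unfolding fits_at_factor_iff[OF ji[folded lx]]
  proof (intro allI impI)
    fix t assume "t < l" "int q + int t < int (length x)"
    then have qt: "q + t < i" using lx by linarith
    have "q + t = j + t + (p - j) div d * d" unfolding q_def by simp
    then have "u ! (q + t) = u ! (j + t)"
      using periodic_nth[OF per, where y = "j + t" and m = "(p - j) div d"] qt by (simp add: algebra_simps)
    then show "x ! nat (int q + int t) = x ! (j + t)"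
      using qt ji \<open>t < l\<close> unfolding x_def by (simp add: nat_int_add)
  qed
  then show ?thesis using qp unfolding x_def take_drop_take[OF ji] by (intro exI[of _ "int q"]) auto
qed

lemma witness_imp_seed_of_prefix:
  assumes iu: "i \<le> length u" and w: "seed_witness u i l j"
  shows "is_seed (take l (drop j u)) (take i u)"
proof -
  define s where "s = take l (drop j u)"
  define x where "x = take i u"
  obtain r where ji: "j + l \<le> i" and cov: "left_covered u j l"
    and r: "j < r" "r \<le> j + l" "i \<le> r + lce u r j"
    using w unfolding seed_witness_def by blast
  have ls: "length s = l" and lx: "length x = i" using iu ji unfolding s_def x_def by auto
  have sx: "s = take l (drop j x)" unfolding s_def x_def by (rule take_drop_take[OF ji, symmetric])
  have "fit_covers_upto s x i" unfolding fit_covers_upto_def ls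
  proof (intro allI impI)
    fix p assume p: "p < i"
    show "\<exists>q. q \<le> int p \<and> int p < q + int l \<and> fits_at s x q"
    proof (cases "p < j")
      case True
      then obtain q where q: "q \<le> int p" "int p < q + int l" "fits_at s u q"
        using cov ls unfolding left_covered_def fit_covers_upto_def s_def by metis
      have "q + int (length s) \<le> int i" using q True ji ls by linarith
      then show ?thesis using q fits_at_take_iff unfolding x_def by blast
    next
      case False
      then show ?thesis using periodic_tail_fit[OF iu ji r, of p] p unfolding s_def x_def by simp
    qed
  qed
  moreover have "sublist s x"
    unfolding sx by (metis sublist_order.order.trans prefix_imp_sublist suffix_imp_sublist
        suffix_drop take_is_prefix)
  ultimately have "is_seed s x" unfolding is_seed_iff_fit_covers lx by simp
  then show ?thesis unfolding s_def x_def .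
qed

lemma has_seed_of_length_prefix_iff:
  assumes "0 < i" and "i \<le> length u"
  shows "has_seed_of_length (take i u) l \<longleftrightarrow> 0 < l \<and> (\<exists>j. seed_witness u i l j)"
proof
  assume "has_seed_of_length (take i u) l"
  then show "0 < l \<and> (\<exists>j. seed_witness u i l j)"
    using seed_of_prefix_imp_witness assms unfolding has_seed_of_length_def by blast
next
  assume "0 < l \<and> (\<exists>j. seed_witness u i l j)"
  then obtain j where "seed_witness u i l j" by blast
  moreover from this have "length (take l (drop j u)) = l"
    using assms unfolding seed_witness_def by auto
  ultimately show "has_seed_of_length (take i u) l"
    using witness_imp_seed_of_prefix assms unfolding has_seed_of_length_def by blast
qed

section \<open>Recurrences for the algorithm\<close>

lemma has_seed_of_length_self: "has_seed_of_length x (length x)"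
proof -
  have "covers x x" unfolding covers_def occurs_at_def by (intro allI impI exI[of _ 0]) simp
  then show ?thesis unfolding has_seed_of_length_def is_seed_def by blast
qed

lemma has_seed_of_length_pos: "x \<noteq> [] \<Longrightarrow> has_seed_of_length x l \<Longrightarrow> 0 < l"
  unfolding has_seed_of_length_def is_seed_iff_fit_covers fit_covers_upto_def by fastforce

lemma seed_array_props:
  assumes "1 \<le> i" and "i \<le> length u"
  shows "0 < seed_array u i" "seed_array u i \<le> i" "has_seed_of_length (take i u) (seed_array u i)"
    and "\<And>l. has_seed_of_length (take i u) l \<Longrightarrow> seed_array u i \<le> l"
proof -
  have self: "has_seed_of_length (take i u) i"
    using has_seed_of_length_self[of "take i u"] assms by simp
  have eq: "seed_array u i = (LEAST l. has_seed_of_length (take i u) l)"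
    unfolding seed_array_def shortest_seed_len_def has_seed_of_length_def ..
  show has: "has_seed_of_length (take i u) (seed_array u i)"
    unfolding eq using self by (rule LeastI)
  show "seed_array u i \<le> i" unfolding eq using self by (rule Least_le)
  show "\<And>l. has_seed_of_length (take i u) l \<Longrightarrow> seed_array u i \<le> l" unfolding eq by (rule Least_le)
  have "take i u \<noteq> []" using assms by (cases u) auto
  then show "0 < seed_array u i" using has_seed_of_length_pos has by blast
qed

text \<open>The shortest seed length of the prefix of length i as far as it has been found among the
  lengths up to L; 0 stands for ``not yet found''.\<close>
definition seed_upto :: "'a list \<Rightarrow> nat \<Rightarrow> nat \<Rightarrow> nat" where
  "seed_upto u i L = (if seed_array u i \<le> L then seed_array u i else 0)"

lemma seed_upto_step:
  assumes i: "1 \<le> i" "i \<le> length u" and l: "0 < l"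
  shows "seed_upto u i l = (if seed_upto u i (l - 1) \<noteq> 0 then seed_upto u i (l - 1)
    else if has_seed_of_length (take i u) l then l else 0)"
proof -
  note S = seed_array_props[OF i]
  show ?thesis
  proof (cases "seed_array u i < l")
    case False
    have "has_seed_of_length (take i u) l \<longleftrightarrow> seed_array u i = l"
      using S(3) S(4)[of l] False by fastforce
    then show ?thesis using False S(1) unfolding seed_upto_def by auto
  qed (use S(1) in \<open>auto simp: seed_upto_def\<close>)
qed

lemma seed_upto_0: "1 \<le> i \<Longrightarrow> i \<le> length u \<Longrightarrow> seed_upto u i 0 = 0"
  unfolding seed_upto_def using seed_array_props(1) by fastforce

lemma seed_upto_below: "1 \<le> i \<Longrightarrow> i \<le> length u \<Longrightarrow> i < l \<Longrightarrow> seed_upto u i l = seed_upto u i (l - 1)"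
  unfolding seed_upto_def using seed_array_props(2) by fastforce

lemma seed_upto_full: "1 \<le> i \<Longrightarrow> i \<le> length u \<Longrightarrow> i \<le> L \<Longrightarrow> seed_upto u i L = seed_array u i"
  unfolding seed_upto_def using seed_array_props(2) by fastforce

fun last_occ :: "'a list \<Rightarrow> nat \<Rightarrow> nat \<Rightarrow> nat \<Rightarrow> nat" where
  "last_occ u j v 0 = 0"
| "last_occ u j v (Suc k) = (if v \<le> lce u k j then Suc k else last_occ u j v k)"

fun last_lce_eq :: "'a list \<Rightarrow> nat \<Rightarrow> nat \<Rightarrow> nat \<Rightarrow> nat" where
  "last_lce_eq u j v 0 = 0"
| "last_lce_eq u j v (Suc k) = (if lce u k j = v then Suc k else last_lce_eq u j v k)"

lemma last_occ_le: "last_occ u j v k \<le> k"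
  by (induction k) auto

lemma last_lce_eq_le: "last_lce_eq u j v k \<le> k"
  by (induction k) auto

lemma last_occ_Suc_max: "last_occ u j v k = max (last_occ u j (Suc v) k) (last_lce_eq u j v k)"
proof (induction k)
  case (Suc k)
  then show ?case using last_occ_le[of u j "Suc v" k] last_lce_eq_le[of u j v k] by auto
qed simp

lemma last_occ_beyond_length: "length u < v \<Longrightarrow> last_occ u j v k = 0"
proof (induction k)
  case (Suc k)
  then show ?case using lce_le_length[of u k j] by auto
qed simp

lemma last_occ_pos:
  "0 < last_occ u j v k \<Longrightarrow> last_occ u j v k - 1 < k \<and> v \<le> lce u (last_occ u j v k - 1) j \<and>
    (\<forall>k'. last_occ u j v k - 1 < k' \<and> k' < k \<longrightarrow> \<not> v \<le> lce u k' j)"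
proof (induction k)
  case (Suc k)
  then show ?case by (cases "v \<le> lce u k j") (auto simp: less_Suc_eq)
qed simp

lemma last_occ_zero: "last_occ u j v k = 0 \<Longrightarrow> k' < k \<Longrightarrow> \<not> v \<le> lce u k' j"
  by (induction k) (auto simp: less_Suc_eq split: if_splits)

lemma fits_at_factor_overhang_iff:
  assumes "j + l \<le> length u" and "j < d" and "d \<le> j + l"
  shows "fits_at (take l (drop j u)) u (int j - int d) \<longleftrightarrow> j + l - d \<le> lce u 0 d"
proof -
  have "(\<forall>t<l. 0 \<le> int j - int d + int t \<longrightarrow> u ! nat (int j - int d + int t) = u ! (j + t)) \<longleftrightarrow>
      (\<forall>t'<j + l - d. u ! t' = u ! (d + t'))"
  proof (intro iffI allI impI)
    fix t' assume H: "\<forall>t<l. 0 \<le> int j - int d + int t \<longrightarrow> u ! nat (int j - int d + int t) = u ! (j + t)"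
      and "t' < j + l - d"
    define t where "t = t' + d - j"
    have t: "t < l" "int j - int d + int t = int t'" "j + t = d + t'"
      using assms \<open>t' < j + l - d\<close> unfolding t_def by auto
    have "0 \<le> int j - int d + int t \<longrightarrow> u ! nat (int j - int d + int t) = u ! (j + t)"
      using H t(1) by blast
    then show "u ! t' = u ! (d + t')" unfolding t(2,3) by simp
  next
    fix t assume "\<forall>t'<j + l - d. u ! t' = u ! (d + t')" "t < l" "0 \<le> int j - int d + int t"
    moreover define t' where "t' = nat (int j - int d + int t)"
    moreover have "t' < j + l - d" "d + t' = j + t"
      using assms \<open>t < l\<close> \<open>0 \<le> int j - int d + int t\<close> unfolding t'_def by auto
    ultimately show "u ! nat (int j - int d + int t) = u ! (j + t)" by simp
  qed
  then show ?thesis using assms unfolding fits_at_factor_iff[OF assms(1)] le_lce_iff by auto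
qed

lemma left_covered_if_overhang:
  assumes jl: "j + l \<le> length u" and d: "j < d" "d \<le> l" "j + l \<le> d + lce u 0 d"
  shows "left_covered u j l"
proof -
  have "fits_at (take l (drop j u)) u (int j - int d)"
    using fits_at_factor_overhang_iff[OF jl] d by simp
  then show ?thesis unfolding left_covered_def fit_covers_upto_def
    using d jl by (intro allI impI exI[of _ "int j - int d"]) auto
qed

lemma left_covered_if_earlier_occurrence:
  assumes jl: "j + l \<le> length u" and k: "k < j" "j \<le> k + l" "l \<le> lce u k j"
    and cov: "left_covered u k l"
  shows "left_covered u j l"
proof -
  define s where "s = take l (drop j u)"
  have ls: "length s = l" using jl unfolding s_def by simp
  have "fits_at s u (int k)" using k jl fits_at_factor_iff_le_lce[OF jl] unfolding s_def by simp
  moreover have "fit_covers_upto s u k"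
    using cov factor_eq_if_le_lce[OF k(3)] unfolding left_covered_def s_def by simp
  ultimately have "fit_covers_upto s u j"
    unfolding fit_covers_upto_def
  proof (intro allI impI)
    fix p assume "\<forall>p<k. \<exists>q. q \<le> int p \<and> int p < q + int (length s) \<and> fits_at s u q"
      "fits_at s u (int k)" "p < j"
    then show "\<exists>q. q \<le> int p \<and> int p < q + int (length s) \<and> fits_at s u q"
      using k ls by (cases "p < k") (auto intro!: exI[of _ "int k"])
  qed
  then show ?thesis unfolding left_covered_def s_def .
qed

text \<open>The fit covering position j - 1 either overhangs the left end of u, or it is an
  occurrence, which may then be replaced by the last occurrence before j.\<close>
lemma left_covered_cases:
  assumes jl: "j + l \<le> length u" and cov: "left_covered u j l" and "0 < j"
  shows "(\<exists>d. j < d \<and> d \<le> l \<and> j + l \<le> d + lce u 0 d) \<or>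
    (0 < last_occ u j l j \<and> j < last_occ u j l j + l \<and> left_covered u (last_occ u j l j - 1) l)"
proof -
  define s where "s = take l (drop j u)"
  have ls: "length s = l" using jl unfolding s_def by simp
  have "fit_covers_upto s u j" using cov unfolding left_covered_def s_def .
  moreover have "j - 1 < j" using \<open>0 < j\<close> by simp
  ultimately obtain q where q: "q \<le> int (j - 1)" "int (j - 1) < q + int l" "fits_at s u q"
    using ls unfolding fit_covers_upto_def by blast
  show ?thesis
  proof (cases "q < 0")
    case True
    define d where "d = nat (int j - q)"
    have "j < d" "d \<le> l" "q = int j - int d" using True q \<open>0 < j\<close> unfolding d_def by auto
    then show ?thesis using q(3) fits_at_factor_overhang_iff[OF jl] unfolding s_def by auto
  next
    case False
    define k where "k = nat q"
    have k: "k < j" "j \<le> k + l" using False q \<open>0 < j\<close> unfolding k_def by auto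
    have "l \<le> lce u k j"
      using q(3) False k jl fits_at_factor_iff_le_lce[OF jl, of k] unfolding s_def k_def by simp
    then have pos: "0 < last_occ u j l j" using last_occ_zero[of u j l j k] k by auto
    define K where "K = last_occ u j l j - 1"
    have "\<not> K < k" using last_occ_pos[OF pos] \<open>l \<le> lce u k j\<close> k unfolding K_def by blast
    have K: "K < j" "l \<le> lce u K j" using last_occ_pos[OF pos] unfolding K_def by auto
    then have "fit_covers_upto s u K"
      using \<open>fit_covers_upto s u j\<close> fit_covers_upto_mono[of s u j K] by simp
    then have "left_covered u K l" unfolding left_covered_def s_def factor_eq_if_le_lce[OF K(2)] .
    then show ?thesis using pos \<open>\<not> K < k\<close> k unfolding K_def by auto
  qed
qed

fun border_reach :: "'a list \<Rightarrow> nat \<Rightarrow> nat \<Rightarrow> nat" where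
  "border_reach u j 0 = 0"
| "border_reach u j (Suc l) = max (border_reach u j l) (if j < Suc l then Suc l + lce u 0 (Suc l) else 0)"

lemma le_border_reach_iff:
  "0 < i \<Longrightarrow> i \<le> border_reach u j l \<longleftrightarrow> (\<exists>d. j < d \<and> d \<le> l \<and> i \<le> d + lce u 0 d)"
  by (induction l) (auto simp: le_Suc_eq le_max_iff_disj)

fun period_reach :: "'a list \<Rightarrow> nat \<Rightarrow> nat \<Rightarrow> nat" where
  "period_reach u j 0 = 0"
| "period_reach u j (Suc l) = max (period_reach u j l) (j + Suc l + lce u (j + Suc l) j)"

lemma le_period_reach_iff:
  "0 < i \<Longrightarrow> i \<le> period_reach u j l \<longleftrightarrow> (\<exists>r. j < r \<and> r \<le> j + l \<and> i \<le> r + lce u r j)"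
proof (induction l)
  case (Suc l)
  have "(\<exists>r. j < r \<and> r \<le> j + Suc l \<and> i \<le> r + lce u r j) \<longleftrightarrow>
      (\<exists>r. j < r \<and> r \<le> j + l \<and> i \<le> r + lce u r j) \<or> i \<le> j + Suc l + lce u (j + Suc l) j"
  proof (intro iffI)
    assume "\<exists>r. j < r \<and> r \<le> j + Suc l \<and> i \<le> r + lce u r j"
    then obtain r where r: "j < r" "r \<le> j + Suc l" "i \<le> r + lce u r j" by blast
    then show "(\<exists>r. j < r \<and> r \<le> j + l \<and> i \<le> r + lce u r j) \<or> i \<le> j + Suc l + lce u (j + Suc l) j"
      by (cases "r = j + Suc l") auto
  next
    assume "(\<exists>r. j < r \<and> r \<le> j + l \<and> i \<le> r + lce u r j) \<or> i \<le> j + Suc l + lce u (j + Suc l) j"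
    then show "\<exists>r. j < r \<and> r \<le> j + Suc l \<and> i \<le> r + lce u r j"
      by (elim disjE) (auto intro: exI[of _ "j + Suc l"])
  qed
  then show ?case using Suc by (simp add: le_max_iff_disj)
qed simp

fun cover_reach :: "'a list \<Rightarrow> nat \<Rightarrow> nat \<Rightarrow> nat" where
  "cover_reach u l 0 = 0"
| "cover_reach u l (Suc j) =
    (if left_covered u j l then max (cover_reach u l j) (period_reach u j l) else cover_reach u l j)"

lemma le_cover_reach_iff:
  "0 < i \<Longrightarrow> i \<le> cover_reach u l m \<longleftrightarrow> (\<exists>j<m. left_covered u j l \<and> i \<le> period_reach u j l)"
  by (induction m) (auto simp: less_Suc_eq le_max_iff_disj)

lemma has_seed_of_length_iff_cover_reach:
  assumes "j + l \<le> length u" and "0 < l"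
  shows "has_seed_of_length (take (j + l) u) l \<longleftrightarrow> j + l \<le> cover_reach u l (Suc j)"
proof -
  have "seed_witness u (j + l) l k \<longleftrightarrow> k < Suc j \<and> left_covered u k l \<and> j + l \<le> period_reach u k l" for k
    unfolding seed_witness_def using le_period_reach_iff[of "j + l" u k l] assms by auto
  then show ?thesis
    using has_seed_of_length_prefix_iff[of "j + l" u l] le_cover_reach_iff[of "j + l" u l "Suc j"] assms
    by (simp del: cover_reach.simps)
qed

lemma left_covered_iff_reach:
  assumes jl: "j + l \<le> length u" and l0: "0 < l"
  shows "left_covered u j l \<longleftrightarrow> (j = 0 \<or> j + l \<le> border_reach u j l) \<or>
    (0 < last_occ u j l j \<and> j < last_occ u j l j + l \<and> left_covered u (last_occ u j l j - 1) l)"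
proof -
  have "left_covered u 0 l" unfolding left_covered_def fit_covers_upto_def by simp
  moreover have "left_covered u j l" if "0 < last_occ u j l j" "j < last_occ u j l j + l"
    "left_covered u (last_occ u j l j - 1) l"
    using left_covered_if_earlier_occurrence[OF jl _ _ _ that(3)] last_occ_pos[OF that(1)] that(2) by auto
  ultimately show ?thesis
    using left_covered_cases[OF jl] left_covered_if_overhang[OF jl] le_border_reach_iff[of "j + l" u j l] l0
    by (cases "j = 0") auto
qed

lemma seed_upto_step_cover_reach:
  assumes "j + l \<le> length u" and "0 < l"
  shows "seed_upto u (j + l) l = (if seed_upto u (j + l) (l - 1) \<noteq> 0 then seed_upto u (j + l) (l - 1)
    else if j + l \<le> cover_reach u l (Suc j) then l else 0)"
  using seed_upto_step[of "j + l" u l] has_seed_of_length_iff_cover_reach[OF assms] assms by simp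

section \<open>A Hoare logic with running times\<close>

definition hoare_time :: "(state \<Rightarrow> bool) \<Rightarrow> com \<Rightarrow> (state \<Rightarrow> bool) \<Rightarrow> nat \<Rightarrow> bool" where
  "hoare_time P c Q T \<longleftrightarrow> (\<forall>s. P s \<longrightarrow> (\<exists>t s'. big_step c s t s' \<and> t \<le> T \<and> Q s'))"

lemma hoare_time_Seq: "hoare_time P c1 Q T1 \<Longrightarrow> hoare_time Q c2 R T2 \<Longrightarrow> hoare_time P (Seq c1 c2) R (T1 + T2)"
  unfolding hoare_time_def by (meson add_mono big_step.Seq)

lemma hoare_time_conseq: "hoare_time P c Q T \<Longrightarrow> (\<And>s. P' s \<Longrightarrow> P s) \<Longrightarrow> (\<And>s. Q s \<Longrightarrow> Q' s) \<Longrightarrow> T \<le> T' \<Longrightarrow> hoare_time P' c Q' T'"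
  unfolding hoare_time_def by (meson order.trans)

lemma hoare_time_While:
  assumes b1: "\<And>m s. m < K \<Longrightarrow> I m s \<Longrightarrow> bval b s"
    and b2: "\<And>s. I K s \<Longrightarrow> \<not> bval b s"
    and body: "\<And>m. m < K \<Longrightarrow> hoare_time (I m) c (I (Suc m)) T"
  shows "hoare_time (I 0) (While b c) (I K) (K * (T + 1) + 1)"
proof -
  have main: "K - m = k \<Longrightarrow> m \<le> K \<Longrightarrow> I m s \<Longrightarrow>
     (\<exists>t s'. big_step (While b c) s t s' \<and> t \<le> (K - m) * (T + 1) + 1 \<and> I K s')" for k m s
  proof (induction k arbitrary: m s)
    case 0
    then have "m = K" by simp
    then have "\<not> bval b s" using b2 0 by simp
    then show ?case using 0 \<open>m = K\<close> big_step.WhileFalse by fastforce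
  next
    case (Suc k)
    have mN': "m < K" using Suc by simp
    have bs: "bval b s" using b1[OF mN' Suc.prems(3)] .
    obtain t1 s1 where s1: "big_step c s t1 s1" "t1 \<le> T" "I (Suc m) s1"
      using body[OF mN'] Suc.prems(3) unfolding hoare_time_def by blast
    have "K - Suc m = k" using Suc by simp
    from Suc.IH[OF this _ s1(3)] mN'
    obtain t2 s2 where s2: "big_step (While b c) s1 t2 s2" "t2 \<le> (K - Suc m) * (T + 1) + 1" "I K s2" by auto
    have "big_step (While b c) s (t1 + t2 + 1) s2" using big_step.WhileTrue[OF bs s1(1) s2(1)] .
    moreover have "t1 + t2 + 1 \<le> (K - m) * (T + 1) + 1"
    proof -
      have "K - m = Suc (K - Suc m)" using mN' by simp
      then show ?thesis using s1(2) s2(2) by simp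
    qed
    ultimately show ?case using s2(3) by blast
  qed
  show ?thesis unfolding hoare_time_def using main[where k=K and m=0] by simp
qed

fun loop_free :: "com \<Rightarrow> bool" where
  "loop_free SKIP = True"
| "loop_free (Assign x e) = True"
| "loop_free (ArrAssign a i e) = True"
| "loop_free (Seq c1 c2) = (loop_free c1 \<and> loop_free c2)"
| "loop_free (If b c1 c2) = (loop_free c1 \<and> loop_free c2)"
| "loop_free (While b c) = False"

fun exec :: "com \<Rightarrow> state \<Rightarrow> state" where
  "exec SKIP s = s"
| "exec (Assign x e) s = s\<lparr>vars := (vars s)(x := aval e s)\<rparr>"
| "exec (ArrAssign a i e) s = s\<lparr>arrs := (arrs s)(a := (arrs s a)(aval i s := aval e s))\<rparr>"
| "exec (Seq c1 c2) s = exec c2 (exec c1 s)"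
| "exec (If b c1 c2) s = (if bval b s then exec c1 s else exec c2 s)"
| "exec (While b c) s = s"

fun exec_time :: "com \<Rightarrow> state \<Rightarrow> nat" where
  "exec_time SKIP s = 1"
| "exec_time (Assign x e) s = 1"
| "exec_time (ArrAssign a i e) s = 1"
| "exec_time (Seq c1 c2) s = exec_time c1 s + exec_time c2 (exec c1 s)"
| "exec_time (If b c1 c2) s = (if bval b s then exec_time c1 s else exec_time c2 s) + 1"
| "exec_time (While b c) s = 0"

fun time_bound :: "com \<Rightarrow> nat" where
  "time_bound SKIP = 1"
| "time_bound (Assign x e) = 1"
| "time_bound (ArrAssign a i e) = 1"
| "time_bound (Seq c1 c2) = time_bound c1 + time_bound c2"
| "time_bound (If b c1 c2) = max (time_bound c1) (time_bound c2) + 1"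
| "time_bound (While b c) = 0"

lemma big_step_exec: "loop_free c \<Longrightarrow> big_step c s (exec_time c s) (exec c s)"
proof (induction c arbitrary: s)
  case SKIP show ?case using big_step.Skip[of s] by simp
next
  case (Assign x e) show ?case using big_step.Assign[of x e s] by simp
next
  case (ArrAssign a i e) show ?case using big_step.ArrAssign[of a i e s] by simp
next
  case (Seq c1 c2) then show ?case by (auto intro: big_step.Seq)
next
  case (If b c1 c2)
  show ?case
  proof (cases "bval b s")
    case True then show ?thesis using big_step.IfTrue[of b s c1 "exec_time c1 s" "exec c1 s" c2] If by simp
  next
    case False then show ?thesis using big_step.IfFalse[of b s c2 "exec_time c2 s" "exec c2 s" c1] If by simp
  qed
qed simp

lemma exec_time_le: "exec_time c s \<le> time_bound c"
proof (induction c arbitrary: s)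
  case (Seq c1 c2) then show ?case by (simp add: add_mono)
next
  case (If b c1 c2) then show ?case by (auto simp: le_max_iff_disj)
qed auto

lemma hoare_time_loop_free: "loop_free c \<Longrightarrow> (\<And>s. P s \<Longrightarrow> Q (exec c s)) \<Longrightarrow> time_bound c \<le> T \<Longrightarrow> hoare_time P c Q T"
  unfolding hoare_time_def using big_step_exec exec_time_le order.trans by blast

section \<open>The algorithm\<close>

text \<open>Tables are stored row by row with rows of width n + 2, so that both indices may run up to
  n + 1. The machine has no multiplication: row offsets such as j W are kept in registers
  (named with the suffix W) and updated by adding W.\<close>
definition width :: "'a list \<Rightarrow> int" where "width u = int (length u) + 2"

definition cell :: "'a list \<Rightarrow> nat \<Rightarrow> nat \<Rightarrow> int" where "cell u a b = int a * width u + int b"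

text \<open>As in init_state, the input array is indexed from 1.\<close>
definition input_array :: "int list \<Rightarrow> int \<Rightarrow> int" where
  "input_array u = (\<lambda>i. if 1 \<le> i \<and> i \<le> int (length u) then u ! nat (i - 1) else 0)"

lemma cell_eq_iff:
  assumes "b \<le> length u + 1" "b' \<le> length u + 1"
  shows "cell u a b = cell u a' b' \<longleftrightarrow> a = a' \<and> b = b'"
proof
  assume e: "cell u a b = cell u a' b'"
  have W: "int b < width u" "int b' < width u" using assms unfolding width_def by auto
  have lt: False if "x < y" "cell u x c = cell u y c'" "int c < width u" for x y c c'
  proof -
    have "(int x + 1) * width u \<le> int y * width u" using that(1) unfolding width_def by (intro mult_right_mono) auto
    then show False using that unfolding cell_def by (simp add: algebra_simps)
  qed
  have "a = a'" using lt[of a a' b b'] lt[of a' a b' b] e W by (metis linorder_neqE_nat)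
  then show "a = a' \<and> b = b'" using e unfolding cell_def by simp
qed simp

definition input_regs :: "int list \<Rightarrow> state \<Rightarrow> bool" where
  "input_regs u s \<longleftrightarrow> vars s ''n'' = int (length u) \<and> vars s ''W'' = width u \<and> arrs s ''u'' = input_array u"

definition zeroed :: "string \<Rightarrow> state \<Rightarrow> bool" where "zeroed X s \<longleftrightarrow> arrs s X = (\<lambda>_. 0)"

definition unwritten_from_reach :: "state \<Rightarrow> bool" where
  "unwritten_from_reach s \<longleftrightarrow> zeroed ''R'' s \<and> zeroed ''A'' s \<and> zeroed ''T'' s \<and> zeroed ''P'' s \<and> zeroed ''Seed'' s"

definition prog_init_loop :: com where
  "prog_init_loop = While (Less (V ''k'') (V ''n'')) (Seq (Assign ''NW'' (Plus (V ''NW'') (V ''W''))) (Assign ''k'' (Plus (V ''k'') (N 1))))"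

definition prog_init :: com where
  "prog_init = Seq (Seq (Assign ''W'' (Plus (V ''n'') (N 2))) (Seq (Assign ''k'' (N 0)) (Assign ''NW'' (N 0)))) prog_init_loop"

definition inv_init :: "int list \<Rightarrow> nat \<Rightarrow> state \<Rightarrow> bool" where
  "inv_init u m s \<longleftrightarrow> input_regs u s \<and> unwritten_from_reach s \<and> vars s ''k'' = int m \<and> vars s ''NW'' = int m * width u"

definition post_init :: "int list \<Rightarrow> state \<Rightarrow> bool" where
  "post_init u s \<longleftrightarrow> input_regs u s \<and> unwritten_from_reach s \<and> vars s ''NW'' = int (length u) * width u"

lemma prog_init_correct: "hoare_time (\<lambda>s. s = init_state u) prog_init (post_init u) (4 * (length u + 1)^2)"
proof -
  have h1: "hoare_time (\<lambda>s. s = init_state u) (Seq (Assign ''W'' (Plus (V ''n'') (N 2))) (Seq (Assign ''k'' (N 0)) (Assign ''NW'' (N 0)))) (inv_init u 0) 3"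
    by (rule hoare_time_loop_free) (auto simp: init_state_def inv_init_def input_regs_def unwritten_from_reach_def zeroed_def width_def input_array_def)
  have h2: "hoare_time (inv_init u 0) prog_init_loop (inv_init u (length u)) (length u * (2 + 1) + 1)"
    unfolding prog_init_loop_def
  proof (rule hoare_time_While)
    fix m s assume "m < length u" "inv_init u m s" then show "bval (Less (V ''k'') (V ''n'')) s" by (simp add: inv_init_def input_regs_def)
  next
    fix s assume "inv_init u (length u) s" then show "\<not> bval (Less (V ''k'') (V ''n'')) s" by (simp add: inv_init_def input_regs_def)
  next
    fix m assume "m < length u"
    show "hoare_time (inv_init u m) (Seq (Assign ''NW'' (Plus (V ''NW'') (V ''W''))) (Assign ''k'' (Plus (V ''k'') (N 1)))) (inv_init u (Suc m)) 2"
      by (rule hoare_time_loop_free) (auto simp: inv_init_def input_regs_def unwritten_from_reach_def zeroed_def algebra_simps)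
  qed
  have "hoare_time (\<lambda>s. s = init_state u) prog_init (inv_init u (length u)) (3 + (length u * (2 + 1) + 1))"
    unfolding prog_init_def by (rule hoare_time_Seq[OF h1 h2])
  then show ?thesis
    by (rule hoare_time_conseq) (auto simp: inv_init_def post_init_def power2_eq_square algebra_simps)
qed

text \<open>L[a W + b] = lce u a b for a, b \<le> n, filled from the last row upwards and from right
  to left, so that L[(a + 1) W + b + 1] is known when L[a W + b] is written.\<close>

definition lce_body :: com where
  "lce_body = Seq (If (And (Less (V ''a'') (V ''n'')) (And (Less (V ''b'') (V ''n''))
        (Eq (Arr ''u'' (Plus (V ''a'') (N 1))) (Arr ''u'' (Plus (V ''b'') (N 1))))))
      (ArrAssign ''L'' (Plus (V ''aW'') (V ''b'')) (Plus (Arr ''L'' (Plus (Plus (Plus (V ''aW'') (V ''b'')) (V ''W'')) (N 1))) (N 1)))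
      (ArrAssign ''L'' (Plus (V ''aW'') (V ''b'')) (N 0)))
    (Assign ''b'' (Minus (V ''b'') (N 1)))"

definition lce_row_loop :: com where "lce_row_loop = While (Less (N (-1)) (V ''b'')) lce_body"

definition lce_row :: com where
  "lce_row = Seq (Assign ''b'' (V ''n'')) (Seq lce_row_loop (Seq (Assign ''a'' (Minus (V ''a'') (N 1))) (Assign ''aW'' (Minus (V ''aW'') (V ''W'')))))"

definition prog_lce :: com where
  "prog_lce = Seq (Seq (Assign ''a'' (V ''n'')) (Assign ''aW'' (V ''NW''))) (While (Less (N (-1)) (V ''a'')) lce_row)"

definition lce_filled :: "int list \<Rightarrow> (int \<Rightarrow> int) \<Rightarrow> nat \<Rightarrow> nat \<Rightarrow> bool" where
  "lce_filled u f m k \<longleftrightarrow> (\<forall>a' b'. a' \<le> length u \<longrightarrow> b' \<le> length u \<longrightarrow>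
      (length u < a' + m \<or> (a' + m = length u \<and> length u < b' + k)) \<longrightarrow> f (cell u a' b') = int (lce u a' b'))"

definition inv_lce_cell :: "int list \<Rightarrow> nat \<Rightarrow> nat \<Rightarrow> state \<Rightarrow> bool" where
  "inv_lce_cell u m k s \<longleftrightarrow> input_regs u s \<and> unwritten_from_reach s \<and> vars s ''a'' = int (length u - m) \<and>
     vars s ''aW'' = int (length u - m) * width u \<and> vars s ''b'' = int (length u) - int k \<and> lce_filled u (arrs s ''L'') m k"

definition inv_lce_row :: "int list \<Rightarrow> nat \<Rightarrow> state \<Rightarrow> bool" where
  "inv_lce_row u m s \<longleftrightarrow> input_regs u s \<and> unwritten_from_reach s \<and> vars s ''a'' = int (length u) - int m \<and>
     vars s ''aW'' = (int (length u) - int m) * width u \<and> lce_filled u (arrs s ''L'') m 0"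

definition lce_table :: "int list \<Rightarrow> (int \<Rightarrow> int) \<Rightarrow> bool" where
  "lce_table u f \<longleftrightarrow> (\<forall>a b. a \<le> length u \<longrightarrow> b \<le> length u \<longrightarrow> f (cell u a b) = int (lce u a b))"

lemma lce_filled_step:
  assumes L: "lce_filled u f m k" and m: "m \<le> length u" and k: "k \<le> length u"
  shows "lce_filled u (f(cell u (length u - m) (length u - k) := int (lce u (length u - m) (length u - k)))) m (Suc k)"
  unfolding lce_filled_def
proof (intro allI impI)
  fix a' b' assume a': "a' \<le> length u" and b': "b' \<le> length u"
    and c: "length u < a' + m \<or> a' + m = length u \<and> length u < b' + Suc k"
  show "(f(cell u (length u - m) (length u - k) := int (lce u (length u - m) (length u - k)))) (cell u a' b') = int (lce u a' b')"
  proof (cases "a' = length u - m \<and> b' = length u - k")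
    case True then show ?thesis by simp
  next
    case False
    then have ne: "cell u a' b' \<noteq> cell u (length u - m) (length u - k)" using cell_eq_iff[of b' u "length u - k" a' "length u - m"] b' by auto
    have "length u < a' + m \<or> a' + m = length u \<and> length u < b' + k" using c False m k by auto
    then show ?thesis using ne L a' b' unfolding lce_filled_def by auto
  qed
qed

lemma lce_filled_value:
  assumes L: "lce_filled u f m k" and m: "m \<le> length u" and k: "k \<le> length u"
  shows "(if length u - m < length u \<and> length u - k < length u \<and> u ! (length u - m) = u ! (length u - k)
          then f (cell u (length u - m + 1) (length u - k + 1)) + 1 else 0) = int (lce u (length u - m) (length u - k))"
proof (cases "length u - m < length u \<and> length u - k < length u \<and> u ! (length u - m) = u ! (length u - k)")
  case True
  have "f (cell u (length u - m + 1) (length u - k + 1)) = int (lce u (length u - m + 1) (length u - k + 1))"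
    using L True unfolding lce_filled_def by auto
  then show ?thesis using True by (simp add: lce.simps[of u "length u - m" "length u - k"])
next
  case False
  then show ?thesis by (auto simp: lce.simps[of u "length u - m" "length u - k"])
qed

lemma lce_body_correct:
  assumes m: "m \<le> length u" and k: "k < length u + 1"
  shows "hoare_time (inv_lce_cell u m k) lce_body (inv_lce_cell u m (Suc k)) 4"
proof (rule hoare_time_loop_free)
  show "loop_free lce_body" by (simp add: lce_body_def)
  show "time_bound lce_body \<le> 4" by (simp add: lce_body_def)
next
  fix s assume I: "inv_lce_cell u m k s"
  define n where "n = length u"
  define a0 where "a0 = n - m"
  define b0 where "b0 = n - k"
  have kn: "k \<le> n" using k unfolding n_def by simp
  have va: "vars s ''a'' = int a0" and vb: "vars s ''b'' = int b0" and vaW: "vars s ''aW'' = int a0 * width u"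
    and vW: "vars s ''W'' = width u" and vn: "vars s ''n'' = int n" and vu: "arrs s ''u'' = input_array u"
    and Ld: "lce_filled u (arrs s ''L'') m k"
    using I kn unfolding inv_lce_cell_def input_regs_def a0_def b0_def n_def by auto
  have kn': "k \<le> length u" using kn unfolding n_def by simp
  have val: "(if a0 < n \<and> b0 < n \<and> u ! a0 = u ! b0 then arrs s ''L'' (cell u (a0 + 1) (b0 + 1)) + 1 else 0) = int (lce u a0 b0)"
    using lce_filled_value[OF Ld m kn'] unfolding a0_def b0_def n_def by simp
  have cell_next: "int a0 * width u + int b0 + width u + 1 = cell u (a0 + 1) (b0 + 1)" unfolding cell_def by (simp add: algebra_simps)
  have e: "exec lce_body s = s\<lparr>arrs := (arrs s)(''L'' := (arrs s ''L'')(int a0 * width u + int b0 := int (lce u a0 b0)))\<rparr>\<lparr>vars := (vars s)(''b'' := int b0 - 1)\<rparr>"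
  proof (cases "a0 < n \<and> b0 < n \<and> u ! a0 = u ! b0")
    case True
    then have r: "arrs s ''L'' (int a0 * width u + int b0 + width u + 1) + 1 = int (lce u a0 b0)" using val cell_next by simp
    show ?thesis unfolding lce_body_def using True r by (simp add: va vb vn vu vaW vW input_array_def n_def)
  next
    case False
    have r: "int (lce u a0 b0) = 0" using val unfolding if_not_P[OF False] by simp
    show ?thesis
    proof (cases "a0 < n \<and> b0 < n")
      case True
      then have "u ! a0 \<noteq> u ! b0" using False by simp
      then show ?thesis unfolding lce_body_def using True r by (simp add: va vb vn vu vaW vW input_array_def n_def)
    next
      case F2: False
      then show ?thesis unfolding lce_body_def using r by (auto simp: va vb vn vu vaW vW input_array_def n_def)
    qed
  qed
  have cell_eq: "int a0 * width u + int b0 = cell u a0 b0" by (simp add: cell_def)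
  have Ld2: "lce_filled u ((arrs s ''L'')(cell u a0 b0 := int (lce u a0 b0))) m (Suc k)"
    using lce_filled_step[OF Ld m kn'] unfolding a0_def b0_def n_def by simp
  show "inv_lce_cell u m (Suc k) (exec lce_body s)" unfolding e cell_eq
    using I Ld2 kn unfolding inv_lce_cell_def input_regs_def unwritten_from_reach_def zeroed_def b0_def n_def by auto
qed

lemma lce_row_loop_correct:
  assumes m: "m \<le> length u"
  shows "hoare_time (inv_lce_cell u m 0) lce_row_loop (inv_lce_cell u m (length u + 1)) ((length u + 1) * (4 + 1) + 1)"
  unfolding lce_row_loop_def
proof (rule hoare_time_While)
  fix k s assume "k < length u + 1" "inv_lce_cell u m k s" then show "bval (Less (N (-1)) (V ''b'')) s"
    by (simp add: inv_lce_cell_def)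
next
  fix s assume "inv_lce_cell u m (length u + 1) s" then show "\<not> bval (Less (N (-1)) (V ''b'')) s"
    by (simp add: inv_lce_cell_def)
next
  fix k assume "k < length u + 1" then show "hoare_time (inv_lce_cell u m k) lce_body (inv_lce_cell u m (Suc k)) 4"
    using lce_body_correct m by blast
qed

lemma lce_row_correct:
  assumes m: "m < length u + 1"
  shows "hoare_time (inv_lce_row u m) lce_row (inv_lce_row u (Suc m)) (1 + (((length u + 1) * (4 + 1) + 1) + 2))"
  unfolding lce_row_def
proof (rule hoare_time_Seq)
  show "hoare_time (inv_lce_row u m) (Assign ''b'' (V ''n'')) (inv_lce_cell u m 0) 1"
    by (rule hoare_time_loop_free) (use m in \<open>auto simp: inv_lce_row_def inv_lce_cell_def input_regs_def unwritten_from_reach_def zeroed_def\<close>)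
  show "hoare_time (inv_lce_cell u m 0) (Seq lce_row_loop (Seq (Assign ''a'' (Minus (V ''a'') (N 1))) (Assign ''aW'' (Minus (V ''aW'') (V ''W''))))) (inv_lce_row u (Suc m))
     (((length u + 1) * (4 + 1) + 1) + 2)"
  proof (rule hoare_time_Seq[OF lce_row_loop_correct])
    show "m \<le> length u" using m by simp
    show "hoare_time (inv_lce_cell u m (length u + 1)) (Seq (Assign ''a'' (Minus (V ''a'') (N 1))) (Assign ''aW'' (Minus (V ''aW'') (V ''W'')))) (inv_lce_row u (Suc m)) 2"
    proof (rule hoare_time_loop_free)
      fix s assume I: "inv_lce_cell u m (length u + 1) s"
      have Ld: "lce_filled u (arrs s ''L'') m (length u + 1)" using I unfolding inv_lce_cell_def by simp
      have "lce_filled u (arrs s ''L'') (Suc m) 0" unfolding lce_filled_def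
      proof (intro allI impI)
        fix a' b' assume a': "a' \<le> length u" and b': "b' \<le> length u"
          and "length u < a' + Suc m \<or> a' + Suc m = length u \<and> length u < b' + 0"
        then have "length u < a' + m \<or> a' + m = length u \<and> length u < b' + (length u + 1)" by auto
        from Ld[unfolded lce_filled_def, rule_format, OF a' b' this]
        show "arrs s ''L'' (cell u a' b') = int (lce u a' b')" .
      qed
      then show "inv_lce_row u (Suc m) (exec (Seq (Assign ''a'' (Minus (V ''a'') (N 1))) (Assign ''aW'' (Minus (V ''aW'') (V ''W'')))) s)"
        using I m unfolding inv_lce_cell_def inv_lce_row_def input_regs_def unwritten_from_reach_def zeroed_def by (auto simp: algebra_simps)
    qed simp_all
  qed
qed

definition post_lce :: "int list \<Rightarrow> state \<Rightarrow> bool" where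
  "post_lce u s \<longleftrightarrow> input_regs u s \<and> unwritten_from_reach s \<and> lce_table u (arrs s ''L'')"

lemma prog_lce_correct: "hoare_time (post_init u) prog_lce (post_lce u) (13 * (length u + 1)^2)"
proof -
  have "hoare_time (post_init u) prog_lce (post_lce u) (2 + ((length u + 1) * ((1 + (((length u + 1) * (4 + 1) + 1) + 2)) + 1) + 1))"
    unfolding prog_lce_def
  proof (rule hoare_time_Seq)
    show "hoare_time (post_init u) (Seq (Assign ''a'' (V ''n'')) (Assign ''aW'' (V ''NW''))) (inv_lce_row u 0) 2"
      by (rule hoare_time_loop_free) (auto simp: post_init_def inv_lce_row_def input_regs_def unwritten_from_reach_def zeroed_def lce_filled_def)
    have "hoare_time (inv_lce_row u 0) (While (Less (N (-1)) (V ''a'')) lce_row) (inv_lce_row u (length u + 1))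
       ((length u + 1) * ((1 + (((length u + 1) * (4 + 1) + 1) + 2)) + 1) + 1)"
    proof (rule hoare_time_While)
      fix m s assume "m < length u + 1" "inv_lce_row u m s" then show "bval (Less (N (-1)) (V ''a'')) s"
        by (simp add: inv_lce_row_def)
    next
      fix s assume "inv_lce_row u (length u + 1) s" then show "\<not> bval (Less (N (-1)) (V ''a'')) s"
        by (simp add: inv_lce_row_def)
    next
      fix m assume "m < length u + 1" then show "hoare_time (inv_lce_row u m) lce_row (inv_lce_row u (Suc m)) (1 + (((length u + 1) * (4 + 1) + 1) + 2))"
        by (rule lce_row_correct)
    qed
    then show "hoare_time (inv_lce_row u 0) (While (Less (N (-1)) (V ''a'')) lce_row) (post_lce u)
       ((length u + 1) * ((1 + (((length u + 1) * (4 + 1) + 1) + 2)) + 1) + 1)"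
      by (rule hoare_time_conseq) (auto simp: inv_lce_row_def post_lce_def lce_table_def lce_filled_def)
  qed
  then show ?thesis by (rule hoare_time_conseq) (auto simp: power2_eq_square algebra_simps)
qed

text \<open>R[j W + l] = border_reach u j l and A[j W + l] = period_reach u j l for j + l \<le> n,
  each row filled by increasing l.\<close>

definition reach_body :: com where
  "reach_body = Seq (Seq (If (Less (V ''j'') (V ''l'')) (Assign ''tmp'' (Plus (V ''l'') (Arr ''L'' (V ''l'')))) (Assign ''tmp'' (N 0)))
                     (If (Less (Arr ''R'' (Minus (Plus (V ''jW'') (V ''l'')) (N 1))) (V ''tmp''))
                         (ArrAssign ''R'' (Plus (V ''jW'') (V ''l'')) (V ''tmp''))
                         (ArrAssign ''R'' (Plus (V ''jW'') (V ''l'')) (Arr ''R'' (Minus (Plus (V ''jW'') (V ''l'')) (N 1))))))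
           (Seq (Seq (Assign ''tmp'' (Plus (Plus (V ''j'') (V ''l'')) (Arr ''L'' (Plus (V ''rW'') (V ''j'')))))
                     (If (Less (Arr ''A'' (Minus (Plus (V ''jW'') (V ''l'')) (N 1))) (V ''tmp''))
                         (ArrAssign ''A'' (Plus (V ''jW'') (V ''l'')) (V ''tmp''))
                         (ArrAssign ''A'' (Plus (V ''jW'') (V ''l'')) (Arr ''A'' (Minus (Plus (V ''jW'') (V ''l'')) (N 1))))))
                (Seq (Assign ''l'' (Plus (V ''l'') (N 1))) (Assign ''rW'' (Plus (V ''rW'') (V ''W'')))))"

definition reach_row_loop :: com where
  "reach_row_loop = While (Less (V ''l'') (Plus (Minus (V ''n'') (V ''j'')) (N 1))) reach_body"

definition reach_row :: com where
  "reach_row = Seq (Seq (Assign ''l'' (N 1)) (Assign ''rW'' (Plus (V ''jW'') (V ''W''))))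
     (Seq reach_row_loop (Seq (Assign ''j'' (Plus (V ''j'') (N 1))) (Assign ''jW'' (Plus (V ''jW'') (V ''W'')))))"

definition prog_reach :: com where
  "prog_reach = Seq (Seq (Assign ''j'' (N 0)) (Assign ''jW'' (N 0))) (While (Less (V ''j'') (Plus (V ''n'') (N 1))) reach_row)"

definition table_filled :: "int list \<Rightarrow> (nat \<Rightarrow> nat \<Rightarrow> nat) \<Rightarrow> (int \<Rightarrow> int) \<Rightarrow> nat \<Rightarrow> nat \<Rightarrow> bool" where
  "table_filled u F f j l \<longleftrightarrow> (\<forall>j' l'. j' + l' \<le> length u \<longrightarrow>
      f (cell u j' l') = int (if j' < j \<or> (j' = j \<and> l' < l) then F j' l' else 0))"

definition unwritten_from_last_occ :: "state \<Rightarrow> bool" where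
  "unwritten_from_last_occ s \<longleftrightarrow> zeroed ''T'' s \<and> zeroed ''P'' s \<and> zeroed ''Seed'' s"

definition inv_reach_cell :: "int list \<Rightarrow> nat \<Rightarrow> nat \<Rightarrow> state \<Rightarrow> bool" where
  "inv_reach_cell u j m s \<longleftrightarrow> input_regs u s \<and> unwritten_from_last_occ s \<and> lce_table u (arrs s ''L'') \<and> vars s ''j'' = int j \<and> vars s ''jW'' = int j * width u \<and>
     vars s ''l'' = int (Suc m) \<and> vars s ''rW'' = int (j + Suc m) * width u \<and>
     table_filled u (border_reach u) (arrs s ''R'') j (Suc m) \<and> table_filled u (period_reach u) (arrs s ''A'') j (Suc m)"

definition inv_reach_row :: "int list \<Rightarrow> nat \<Rightarrow> state \<Rightarrow> bool" where
  "inv_reach_row u j s \<longleftrightarrow> input_regs u s \<and> unwritten_from_last_occ s \<and> lce_table u (arrs s ''L'') \<and> vars s ''j'' = int j \<and> vars s ''jW'' = int j * width u \<and>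
     table_filled u (border_reach u) (arrs s ''R'') j 0 \<and> table_filled u (period_reach u) (arrs s ''A'') j 0"

lemma table_filled_read: "table_filled u F f j l \<Longrightarrow> j' + l' \<le> length u \<Longrightarrow> (j' < j \<or> (j' = j \<and> l' < l)) \<Longrightarrow> f (cell u j' l') = int (F j' l')"
  unfolding table_filled_def by auto

lemma table_filled_step: "table_filled u F f j l \<Longrightarrow> j + l \<le> length u \<Longrightarrow> table_filled u F (f(cell u j l := int (F j l))) j (Suc l)"
  unfolding table_filled_def
proof (intro allI impI)
  fix j' l' assume T: "\<forall>j' l'. j' + l' \<le> length u \<longrightarrow> f (cell u j' l') = int (if j' < j \<or> j' = j \<and> l' < l then F j' l' else 0)"
    and jl: "j + l \<le> length u" and jl': "j' + l' \<le> length u"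
  show "(f(cell u j l := int (F j l))) (cell u j' l') = int (if j' < j \<or> j' = j \<and> l' < Suc l then F j' l' else 0)"
  proof (cases "j' = j \<and> l' = l")
    case True then show ?thesis by simp
  next
    case False
    then have "cell u j' l' \<noteq> cell u j l" using cell_eq_iff[of l' u l j' j] jl jl' by auto
    then show ?thesis using T jl' False by auto
  qed
qed

lemma table_filled_next: "table_filled u F f j l \<Longrightarrow> length u < j + l \<Longrightarrow> table_filled u F f (Suc j) 0"
  unfolding table_filled_def by (auto simp: less_Suc_eq)

lemma table_filled_skip: "table_filled u F f j 0 \<Longrightarrow> F j 0 = 0 \<Longrightarrow> table_filled u F f j 1"
  unfolding table_filled_def by auto

lemma reach_body_correct:
  assumes m: "m < length u - j" and j: "j \<le> length u"
  shows "hoare_time (inv_reach_cell u j m) reach_body (inv_reach_cell u j (Suc m)) 12"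
proof (rule hoare_time_loop_free)
  show "loop_free reach_body" by (simp add: reach_body_def)
  show "time_bound reach_body \<le> 12" by (simp add: reach_body_def)
next
  fix s assume I: "inv_reach_cell u j m s"
  define l where "l = Suc m"
  have jl: "j + l \<le> length u" using m unfolding l_def by simp
  have vj: "vars s ''j'' = int j" and vjW: "vars s ''jW'' = int j * width u" and vl: "vars s ''l'' = int l"
    and vrW: "vars s ''rW'' = int (j + l) * width u" and vW: "vars s ''W'' = width u"
    and Lt: "lce_table u (arrs s ''L'')" and TR: "table_filled u (border_reach u) (arrs s ''R'') j l" and TA: "table_filled u (period_reach u) (arrs s ''A'') j l"
    using I unfolding inv_reach_cell_def input_regs_def l_def by auto
  have "cell u 0 l = int l" by (simp add: cell_def)
  moreover have "arrs s ''L'' (cell u 0 l) = int (lce u 0 l)" using Lt jl unfolding lce_table_def by simp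
  ultimately have L1: "arrs s ''L'' (int l) = int (lce u 0 l)" by simp
  have "arrs s ''L'' (cell u (j + l) j) = int (lce u (j + l) j)" using Lt jl unfolding lce_table_def by simp
  then have L2: "arrs s ''L'' (int (j + l) * width u + int j) = int (lce u (j + l) j)" by (simp add: cell_def)
  have cell_jl: "int j * width u + int l = cell u j l" unfolding cell_def by simp
  have cell_prev: "int j * width u + int l - 1 = cell u j m" unfolding cell_def l_def by simp
  have R0: "arrs s ''R'' (cell u j m) = int (border_reach u j m)" using table_filled_read[OF TR, of j m] jl unfolding l_def by simp
  have A0: "arrs s ''A'' (cell u j m) = int (period_reach u j m)" using table_filled_read[OF TA, of j m] jl unfolding l_def by simp
  have RMs: "border_reach u j l = max (border_reach u j m) (if j < l then l + lce u 0 l else 0)" unfolding l_def by simp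
  have Ams: "period_reach u j l = max (period_reach u j m) (j + l + lce u (j + l) j)" unfolding l_def by simp
  have eR: "arrs (exec reach_body s) ''R'' = (arrs s ''R'')(cell u j l := int (border_reach u j l))"
    unfolding reach_body_def RMs using vj vjW vl L1 cell_jl cell_prev R0
    by (auto simp: max_def)
  have eA: "arrs (exec reach_body s) ''A'' = (arrs s ''A'')(cell u j l := int (period_reach u j l))"
    unfolding reach_body_def Ams using vj vjW vl L2 vrW cell_jl cell_prev A0
    by (auto simp: max_def)
  have eo: "\<And>X. X \<noteq> ''R'' \<Longrightarrow> X \<noteq> ''A'' \<Longrightarrow> arrs (exec reach_body s) X = arrs s X"
    unfolding reach_body_def by auto
  have ev: "\<And>x. x \<noteq> ''tmp'' \<Longrightarrow> x \<noteq> ''l'' \<Longrightarrow> x \<noteq> ''rW'' \<Longrightarrow> vars (exec reach_body s) x = vars s x"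
    unfolding reach_body_def by auto
  have evl: "vars (exec reach_body s) ''l'' = vars s ''l'' + 1" "vars (exec reach_body s) ''rW'' = vars s ''rW'' + vars s ''W''"
    unfolding reach_body_def by auto
  have T1: "table_filled u (border_reach u) ((arrs s ''R'')(cell u j l := int (border_reach u j l))) j (Suc l)" by (rule table_filled_step[OF TR jl])
  have T2: "table_filled u (period_reach u) ((arrs s ''A'')(cell u j l := int (period_reach u j l))) j (Suc l)" by (rule table_filled_step[OF TA jl])
  have sm: "Suc m = l" by (simp add: l_def)
  have bs: "input_regs u s" "unwritten_from_last_occ s" using I unfolding inv_reach_cell_def by auto
  show "inv_reach_cell u j (Suc m) (exec reach_body s)"
    unfolding inv_reach_cell_def input_regs_def unwritten_from_last_occ_def zeroed_def sm eR eA
    using bs Lt T1 T2 vj vjW vl vrW vW unfolding input_regs_def unwritten_from_last_occ_def zeroed_def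
    by (simp add: eo ev evl algebra_simps del: border_reach.simps period_reach.simps)
qed

lemma reach_row_loop_correct:
  assumes j: "j \<le> length u"
  shows "hoare_time (inv_reach_cell u j 0) reach_row_loop (inv_reach_cell u j (length u - j)) ((length u + 1) * 13 + 1)"
proof -
  have "hoare_time (inv_reach_cell u j 0) reach_row_loop (inv_reach_cell u j (length u - j)) ((length u - j) * (12 + 1) + 1)"
    unfolding reach_row_loop_def
  proof (rule hoare_time_While)
    fix m s assume "m < length u - j" "inv_reach_cell u j m s" then show "bval (Less (V ''l'') (Plus (Minus (V ''n'') (V ''j'')) (N 1))) s"
      by (auto simp: inv_reach_cell_def input_regs_def)
  next
    fix s assume "inv_reach_cell u j (length u - j) s" then show "\<not> bval (Less (V ''l'') (Plus (Minus (V ''n'') (V ''j'')) (N 1))) s"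
      using j by (auto simp: inv_reach_cell_def input_regs_def)
  next
    fix m assume "m < length u - j" then show "hoare_time (inv_reach_cell u j m) reach_body (inv_reach_cell u j (Suc m)) 12"
      using reach_body_correct j by blast
  qed
  then show ?thesis by (rule hoare_time_conseq) auto
qed

lemma reach_row_correct:
  assumes j: "j < length u + 1"
  shows "hoare_time (inv_reach_row u j) reach_row (inv_reach_row u (Suc j)) (2 + (((length u + 1) * 13 + 1) + 2))"
  unfolding reach_row_def
proof (rule hoare_time_Seq)
  show "hoare_time (inv_reach_row u j) (Seq (Assign ''l'' (N 1)) (Assign ''rW'' (Plus (V ''jW'') (V ''W'')))) (inv_reach_cell u j 0) 2"
  proof (rule hoare_time_loop_free)
    fix s assume I: "inv_reach_row u j s"
    then have "table_filled u (border_reach u) (arrs s ''R'') j 1" "table_filled u (period_reach u) (arrs s ''A'') j 1"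
      using table_filled_skip[of u "border_reach u" _ j] table_filled_skip[of u "period_reach u" _ j] unfolding inv_reach_row_def by auto
    then show "inv_reach_cell u j 0 (exec (Seq (Assign ''l'' (N 1)) (Assign ''rW'' (Plus (V ''jW'') (V ''W'')))) s)"
      using I unfolding inv_reach_row_def inv_reach_cell_def input_regs_def unwritten_from_last_occ_def zeroed_def by (simp add: algebra_simps)
  qed simp_all
  show "hoare_time (inv_reach_cell u j 0) (Seq reach_row_loop (Seq (Assign ''j'' (Plus (V ''j'') (N 1))) (Assign ''jW'' (Plus (V ''jW'') (V ''W''))))) (inv_reach_row u (Suc j))
     (((length u + 1) * 13 + 1) + 2)"
  proof (rule hoare_time_Seq[OF reach_row_loop_correct])
    show "j \<le> length u" using j by simp
    show "hoare_time (inv_reach_cell u j (length u - j)) (Seq (Assign ''j'' (Plus (V ''j'') (N 1))) (Assign ''jW'' (Plus (V ''jW'') (V ''W'')))) (inv_reach_row u (Suc j)) 2"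
    proof (rule hoare_time_loop_free)
      fix s assume I: "inv_reach_cell u j (length u - j) s"
      have "length u < j + Suc (length u - j)" using j by simp
      then have "table_filled u (border_reach u) (arrs s ''R'') (Suc j) 0" "table_filled u (period_reach u) (arrs s ''A'') (Suc j) 0"
        using table_filled_next[of u "border_reach u" "arrs s ''R''" j] table_filled_next[of u "period_reach u" "arrs s ''A''" j] I unfolding inv_reach_cell_def by auto
      then show "inv_reach_row u (Suc j) (exec (Seq (Assign ''j'' (Plus (V ''j'') (N 1))) (Assign ''jW'' (Plus (V ''jW'') (V ''W'')))) s)"
        using I unfolding inv_reach_cell_def inv_reach_row_def input_regs_def unwritten_from_last_occ_def zeroed_def by (simp add: algebra_simps)
    qed simp_all
  qed
qed

definition table_of :: "int list \<Rightarrow> (nat \<Rightarrow> nat \<Rightarrow> nat) \<Rightarrow> (int \<Rightarrow> int) \<Rightarrow> bool" where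
  "table_of u F f \<longleftrightarrow> (\<forall>j l. j + l \<le> length u \<longrightarrow> f (cell u j l) = int (F j l))"

definition post_reach :: "int list \<Rightarrow> state \<Rightarrow> bool" where
  "post_reach u s \<longleftrightarrow> input_regs u s \<and> unwritten_from_last_occ s \<and> lce_table u (arrs s ''L'') \<and> table_of u (border_reach u) (arrs s ''R'') \<and> table_of u (period_reach u) (arrs s ''A'')"

lemma prog_reach_correct: "hoare_time (post_lce u) prog_reach (post_reach u) (22 * (length u + 1)^2)"
proof -
  have "hoare_time (post_lce u) prog_reach (post_reach u) (2 + ((length u + 1) * ((2 + (((length u + 1) * 13 + 1) + 2)) + 1) + 1))"
    unfolding prog_reach_def
  proof (rule hoare_time_Seq)
    show "hoare_time (post_lce u) (Seq (Assign ''j'' (N 0)) (Assign ''jW'' (N 0))) (inv_reach_row u 0) 2"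
      by (rule hoare_time_loop_free) (auto simp: post_lce_def inv_reach_row_def input_regs_def unwritten_from_reach_def unwritten_from_last_occ_def zeroed_def table_filled_def)
    have "hoare_time (inv_reach_row u 0) (While (Less (V ''j'') (Plus (V ''n'') (N 1))) reach_row) (inv_reach_row u (length u + 1))
       ((length u + 1) * ((2 + (((length u + 1) * 13 + 1) + 2)) + 1) + 1)"
    proof (rule hoare_time_While)
      fix m s assume "m < length u + 1" "inv_reach_row u m s" then show "bval (Less (V ''j'') (Plus (V ''n'') (N 1))) s"
        by (auto simp: inv_reach_row_def input_regs_def)
    next
      fix s assume "inv_reach_row u (length u + 1) s" then show "\<not> bval (Less (V ''j'') (Plus (V ''n'') (N 1))) s"
        by (auto simp: inv_reach_row_def input_regs_def)
    next
      fix m assume "m < length u + 1" then show "hoare_time (inv_reach_row u m) reach_row (inv_reach_row u (Suc m)) (2 + (((length u + 1) * 13 + 1) + 2))"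
        by (rule reach_row_correct)
    qed
    then show "hoare_time (inv_reach_row u 0) (While (Less (V ''j'') (Plus (V ''n'') (N 1))) reach_row) (post_reach u)
       ((length u + 1) * ((2 + (((length u + 1) * 13 + 1) + 2)) + 1) + 1)"
      by (rule hoare_time_conseq) (auto simp: inv_reach_row_def post_reach_def table_of_def table_filled_def)
  qed
  then show ?thesis by (rule hoare_time_conseq) (auto simp: power2_eq_square algebra_simps)
qed

text \<open>P[j W + v] = last_occ u j v j: row j of T first records last_lce_eq u j w j for all w,
  and row j of P is then its suffix maximum (last_occ_Suc_max).\<close>

definition scan_body :: com where
  "scan_body = Seq (ArrAssign ''T'' (Plus (V ''jW'') (Arr ''L'' (Plus (V ''kW'') (V ''j'')))) (Plus (V ''k'') (N 1)))
     (Seq (Assign ''k'' (Plus (V ''k'') (N 1))) (Assign ''kW'' (Plus (V ''kW'') (V ''W''))))"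

definition suffix_max_body :: com where
  "suffix_max_body = Seq (If (Less (Arr ''P'' (Plus (Plus (V ''jW'') (V ''v'')) (N 1))) (Arr ''T'' (Plus (V ''jW'') (V ''v''))))
        (ArrAssign ''P'' (Plus (V ''jW'') (V ''v'')) (Arr ''T'' (Plus (V ''jW'') (V ''v''))))
        (ArrAssign ''P'' (Plus (V ''jW'') (V ''v'')) (Arr ''P'' (Plus (Plus (V ''jW'') (V ''v'')) (N 1)))))
     (Assign ''v'' (Minus (V ''v'') (N 1)))"

definition last_occ_row :: com where
  "last_occ_row = Seq (Seq (Assign ''k'' (N 0)) (Assign ''kW'' (N 0)))
     (Seq (While (Less (V ''k'') (V ''j'')) scan_body)
     (Seq (Assign ''v'' (V ''n''))
     (Seq (While (Less (N (-1)) (V ''v'')) suffix_max_body)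
     (Seq (Assign ''j'' (Plus (V ''j'') (N 1))) (Assign ''jW'' (Plus (V ''jW'') (V ''W'')))))))"

definition prog_last_occ :: com where
  "prog_last_occ = Seq (Seq (Assign ''j'' (N 0)) (Assign ''jW'' (N 0))) (While (Less (V ''j'') (Plus (V ''n'') (N 1))) last_occ_row)"

definition last_eq_filled :: "int list \<Rightarrow> (int \<Rightarrow> int) \<Rightarrow> nat \<Rightarrow> nat \<Rightarrow> bool" where
  "last_eq_filled u f j k \<longleftrightarrow> (j \<le> length u \<longrightarrow> (\<forall>w \<le> length u + 1. f (cell u j w) = int (last_lce_eq u j w k))) \<and>
     (\<forall>j' w. j < j' \<longrightarrow> j' \<le> length u \<longrightarrow> w \<le> length u + 1 \<longrightarrow> f (cell u j' w) = 0)"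

definition last_occ_filled :: "int list \<Rightarrow> (int \<Rightarrow> int) \<Rightarrow> nat \<Rightarrow> nat \<Rightarrow> bool" where
  "last_occ_filled u f j m \<longleftrightarrow> (\<forall>j' v. j' \<le> length u \<longrightarrow> v \<le> length u + 1 \<longrightarrow>
     f (cell u j' v) = int (if v \<le> length u \<and> (j' < j \<or> (j' = j \<and> length u < v + m)) then last_occ u j' v j' else 0))"

definition tables_ready :: "int list \<Rightarrow> state \<Rightarrow> bool" where
  "tables_ready u s \<longleftrightarrow> input_regs u s \<and> zeroed ''Seed'' s \<and> lce_table u (arrs s ''L'') \<and> table_of u (border_reach u) (arrs s ''R'') \<and> table_of u (period_reach u) (arrs s ''A'')"

definition inv_last_occ_row :: "int list \<Rightarrow> nat \<Rightarrow> state \<Rightarrow> bool" where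
  "inv_last_occ_row u j s \<longleftrightarrow> tables_ready u s \<and> vars s ''j'' = int j \<and> vars s ''jW'' = int j * width u \<and>
     last_eq_filled u (arrs s ''T'') j 0 \<and> last_occ_filled u (arrs s ''P'') j 0"

definition inv_scan :: "int list \<Rightarrow> nat \<Rightarrow> nat \<Rightarrow> state \<Rightarrow> bool" where
  "inv_scan u j k s \<longleftrightarrow> tables_ready u s \<and> vars s ''j'' = int j \<and> vars s ''jW'' = int j * width u \<and>
     vars s ''k'' = int k \<and> vars s ''kW'' = int k * width u \<and>
     last_eq_filled u (arrs s ''T'') j k \<and> last_occ_filled u (arrs s ''P'') j 0"

definition inv_suffix_max :: "int list \<Rightarrow> nat \<Rightarrow> nat \<Rightarrow> state \<Rightarrow> bool" where
  "inv_suffix_max u j m s \<longleftrightarrow> tables_ready u s \<and> vars s ''j'' = int j \<and> vars s ''jW'' = int j * width u \<and>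
     vars s ''v'' = int (length u) - int m \<and>
     last_eq_filled u (arrs s ''T'') j j \<and> last_occ_filled u (arrs s ''P'') j m"

lemma last_eq_filled_step:
  assumes T: "last_eq_filled u f j k" and j: "j \<le> length u"
  shows "last_eq_filled u (f(cell u j (lce u k j) := int (Suc k))) j (Suc k)"
  unfolding last_eq_filled_def
proof (intro conjI allI impI)
  have lk: "lce u k j \<le> length u" using lce_le_length[of u k j] by simp
  fix w assume "j \<le> length u" and w: "w \<le> length u + 1"
  show "(f(cell u j (lce u k j) := int (Suc k))) (cell u j w) = int (last_lce_eq u j w (Suc k))"
  proof (cases "w = lce u k j")
    case True then show ?thesis by simp
  next
    case False
    then have "cell u j w \<noteq> cell u j (lce u k j)" using cell_eq_iff[of w u "lce u k j" j j] w lk by auto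
    then show ?thesis using T w False j unfolding last_eq_filled_def by auto
  qed
next
  have lk: "lce u k j \<le> length u" using lce_le_length[of u k j] by simp
  fix j' w assume "j < j'" "j' \<le> length u" "w \<le> length u + 1"
  then have "cell u j' w \<noteq> cell u j (lce u k j)" using cell_eq_iff[of w u "lce u k j" j' j] lk by auto
  then show "(f(cell u j (lce u k j) := int (Suc k))) (cell u j' w) = 0"
    using T \<open>j < j'\<close> \<open>j' \<le> length u\<close> \<open>w \<le> length u + 1\<close> unfolding last_eq_filled_def by auto
qed

lemma scan_body_correct:
  assumes k: "k < j" and j: "j \<le> length u"
  shows "hoare_time (inv_scan u j k) scan_body (inv_scan u j (Suc k)) 3"
proof (rule hoare_time_loop_free)
  show "loop_free scan_body" by (simp add: scan_body_def)
  show "time_bound scan_body \<le> 3" by (simp add: scan_body_def)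
next
  fix s assume I: "inv_scan u j k s"
  have vj: "vars s ''j'' = int j" and vjW: "vars s ''jW'' = int j * width u" and vk: "vars s ''k'' = int k"
    and vkW: "vars s ''kW'' = int k * width u" and vW: "vars s ''W'' = width u"
    and Lt: "lce_table u (arrs s ''L'')" and T: "last_eq_filled u (arrs s ''T'') j k"
    using I unfolding inv_scan_def tables_ready_def input_regs_def by auto
  have "arrs s ''L'' (cell u k j) = int (lce u k j)" using Lt k j unfolding lce_table_def by simp
  then have L1: "arrs s ''L'' (int k * width u + int j) = int (lce u k j)" by (simp add: cell_def)
  have cell_eq: "int j * width u + int (lce u k j) = cell u j (lce u k j)" by (simp add: cell_def)
  have eT: "arrs (exec scan_body s) ''T'' = (arrs s ''T'')(cell u j (lce u k j) := int (Suc k))"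
    unfolding scan_body_def using vj vjW vk vkW L1 cell_eq by (simp add: add.commute)
  have eo: "\<And>X. X \<noteq> ''T'' \<Longrightarrow> arrs (exec scan_body s) X = arrs s X"
    unfolding scan_body_def by auto
  have ev: "\<And>x. x \<noteq> ''k'' \<Longrightarrow> x \<noteq> ''kW'' \<Longrightarrow> vars (exec scan_body s) x = vars s x"
    unfolding scan_body_def by auto
  have evk: "vars (exec scan_body s) ''k'' = vars s ''k'' + 1" "vars (exec scan_body s) ''kW'' = vars s ''kW'' + vars s ''W''"
    unfolding scan_body_def by auto
  have T2: "last_eq_filled u ((arrs s ''T'')(cell u j (lce u k j) := int (Suc k))) j (Suc k)" by (rule last_eq_filled_step[OF T j])
  have q: "tables_ready u s" "last_occ_filled u (arrs s ''P'') j 0" using I unfolding inv_scan_def by auto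
  have q2: "tables_ready u (exec scan_body s)" using q(1) unfolding tables_ready_def input_regs_def zeroed_def by (simp add: eo ev)
  show "inv_scan u j (Suc k) (exec scan_body s)"
    unfolding inv_scan_def eT using q2 q T2 vj vjW vk vkW vW by (simp add: eo ev evk algebra_simps)
qed

lemma last_occ_filled_step:
  assumes P: "last_occ_filled u f j m" and m: "m \<le> length u" and j: "j \<le> length u"
  shows "last_occ_filled u (f(cell u j (length u - m) := int (last_occ u j (length u - m) j))) j (Suc m)"
  unfolding last_occ_filled_def
proof (intro allI impI)
  fix j' v assume j': "j' \<le> length u" and v: "v \<le> length u + 1"
  show "(f(cell u j (length u - m) := int (last_occ u j (length u - m) j))) (cell u j' v) =
       int (if v \<le> length u \<and> (j' < j \<or> j' = j \<and> length u < v + Suc m) then last_occ u j' v j' else 0)"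
  proof (cases "j' = j \<and> v = length u - m")
    case True then show ?thesis using m by simp
  next
    case False
    then have "cell u j' v \<noteq> cell u j (length u - m)" using cell_eq_iff[of v u "length u - m" j' j] v by auto
    moreover have "(v \<le> length u \<and> (j' < j \<or> j' = j \<and> length u < v + Suc m)) \<longleftrightarrow>
                   (v \<le> length u \<and> (j' < j \<or> j' = j \<and> length u < v + m))" using False m by auto
    ultimately show ?thesis using P j' v unfolding last_occ_filled_def by simp
  qed
qed

lemma suffix_max_body_correct:
  assumes m: "m < length u + 1" and j: "j \<le> length u"
  shows "hoare_time (inv_suffix_max u j m) suffix_max_body (inv_suffix_max u j (Suc m)) 3"
proof (rule hoare_time_loop_free)
  show "loop_free suffix_max_body" by (simp add: suffix_max_body_def)
  show "time_bound suffix_max_body \<le> 3" by (simp add: suffix_max_body_def)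
next
  fix s assume I: "inv_suffix_max u j m s"
  define v0 where "v0 = length u - m"
  have v0n: "v0 \<le> length u" unfolding v0_def by simp
  have vj: "vars s ''j'' = int j" and vjW: "vars s ''jW'' = int j * width u" and vv: "vars s ''v'' = int v0"
    and T: "last_eq_filled u (arrs s ''T'') j j" and P: "last_occ_filled u (arrs s ''P'') j m"
    using I m unfolding inv_suffix_max_def tables_ready_def input_regs_def v0_def by auto
  have T1: "arrs s ''T'' (int j * width u + int v0) = int (last_lce_eq u j v0 j)"
    using T v0n j unfolding last_eq_filled_def cell_def by auto
  have P_next: "arrs s ''P'' (int j * width u + int v0 + 1) = int (last_occ u j (Suc v0) j)"
  proof -
    have "arrs s ''P'' (cell u j (Suc v0)) = int (if Suc v0 \<le> length u \<and> (j < j \<or> j = j \<and> length u < Suc v0 + m) then last_occ u j (Suc v0) j else 0)"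
      using P j v0n unfolding last_occ_filled_def by simp
    also have "\<dots> = int (last_occ u j (Suc v0) j)" using last_occ_beyond_length[of u "Suc v0" j j] m unfolding v0_def by auto
    moreover have "cell u j (Suc v0) = int j * width u + int v0 + 1" by (simp add: cell_def)
    ultimately show ?thesis by simp
  qed
  have cell_eq: "int j * width u + int v0 = cell u j v0" by (simp add: cell_def)
  have val: "last_occ u j v0 j = max (last_occ u j (Suc v0) j) (last_lce_eq u j v0 j)" by (rule last_occ_Suc_max)
  have eP: "arrs (exec suffix_max_body s) ''P'' = (arrs s ''P'')(cell u j v0 := int (last_occ u j v0 j))"
    unfolding suffix_max_body_def val using vjW vv T1 P_next cell_eq by (auto simp: max_def)
  have eo: "\<And>X. X \<noteq> ''P'' \<Longrightarrow> arrs (exec suffix_max_body s) X = arrs s X"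
    unfolding suffix_max_body_def by auto
  have ev: "\<And>x. x \<noteq> ''v'' \<Longrightarrow> vars (exec suffix_max_body s) x = vars s x"
    unfolding suffix_max_body_def by auto
  have evv: "vars (exec suffix_max_body s) ''v'' = vars s ''v'' - 1"
    unfolding suffix_max_body_def by auto
  have P_filled: "last_occ_filled u ((arrs s ''P'')(cell u j v0 := int (last_occ u j v0 j))) j (Suc m)"
    unfolding v0_def by (rule last_occ_filled_step[OF P _ j]) (use m in simp)
  have q: "tables_ready u s" using I unfolding inv_suffix_max_def by auto
  have q2: "tables_ready u (exec suffix_max_body s)" using q unfolding tables_ready_def input_regs_def zeroed_def by (simp add: eo ev)
  show "inv_suffix_max u j (Suc m) (exec suffix_max_body s)"
    unfolding inv_suffix_max_def eP using q2 P_filled T vj vjW vv m unfolding v0_def by (simp add: eo ev evv)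
qed

lemma last_eq_filled_next: "last_eq_filled u f j j \<Longrightarrow> last_eq_filled u f (Suc j) 0"
  unfolding last_eq_filled_def by auto

lemma last_occ_filled_next: "last_occ_filled u f j (length u + 1) \<Longrightarrow> last_occ_filled u f (Suc j) 0"
  unfolding last_occ_filled_def
proof (intro allI impI)
  fix j' v assume P: "\<forall>j' v. j' \<le> length u \<longrightarrow> v \<le> length u + 1 \<longrightarrow>
          f (cell u j' v) = int (if v \<le> length u \<and> (j' < j \<or> j' = j \<and> length u < v + (length u + 1)) then last_occ u j' v j' else 0)"
    and j': "j' \<le> length u" and v: "v \<le> length u + 1"
  have "(v \<le> length u \<and> (j' < j \<or> j' = j \<and> length u < v + (length u + 1))) \<longleftrightarrow>
        (v \<le> length u \<and> (j' < Suc j \<or> j' = Suc j \<and> length u < v + 0))" by auto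
  then show "f (cell u j' v) = int (if v \<le> length u \<and> (j' < Suc j \<or> j' = Suc j \<and> length u < v + 0) then last_occ u j' v j' else 0)"
    using P j' v by simp
qed

lemma last_occ_row_correct:
  assumes j: "j < length u + 1"
  shows "hoare_time (inv_last_occ_row u j) last_occ_row (inv_last_occ_row u (Suc j)) (2 + ((j * (3 + 1) + 1) + (1 + (((length u + 1) * (3 + 1) + 1) + 2))))"
  unfolding last_occ_row_def
proof (rule hoare_time_Seq)
  show "hoare_time (inv_last_occ_row u j) (Seq (Assign ''k'' (N 0)) (Assign ''kW'' (N 0))) (inv_scan u j 0) 2"
    by (rule hoare_time_loop_free) (auto simp: inv_last_occ_row_def inv_scan_def tables_ready_def input_regs_def zeroed_def)
  have jn: "j \<le> length u" using j by simp
  have Wk: "hoare_time (inv_scan u j 0) (While (Less (V ''k'') (V ''j'')) scan_body) (inv_scan u j j) (j * (3 + 1) + 1)"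
  proof (rule hoare_time_While)
    fix m s assume "m < j" "inv_scan u j m s" then show "bval (Less (V ''k'') (V ''j'')) s" by (auto simp: inv_scan_def)
  next
    fix s assume "inv_scan u j j s" then show "\<not> bval (Less (V ''k'') (V ''j'')) s" by (auto simp: inv_scan_def)
  next
    fix m assume "m < j" then show "hoare_time (inv_scan u j m) scan_body (inv_scan u j (Suc m)) 3" using scan_body_correct jn by blast
  qed
  have Wv: "hoare_time (inv_suffix_max u j 0) (While (Less (N (-1)) (V ''v'')) suffix_max_body) (inv_suffix_max u j (length u + 1)) ((length u + 1) * (3 + 1) + 1)"
  proof (rule hoare_time_While)
    fix m s assume "m < length u + 1" "inv_suffix_max u j m s" then show "bval (Less (N (-1)) (V ''v'')) s" by (auto simp: inv_suffix_max_def)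
  next
    fix s assume "inv_suffix_max u j (length u + 1) s" then show "\<not> bval (Less (N (-1)) (V ''v'')) s" by (auto simp: inv_suffix_max_def)
  next
    fix m assume "m < length u + 1" then show "hoare_time (inv_suffix_max u j m) suffix_max_body (inv_suffix_max u j (Suc m)) 3" using suffix_max_body_correct jn by blast
  qed
  have A1: "hoare_time (inv_scan u j j) (Assign ''v'' (V ''n'')) (inv_suffix_max u j 0) 1"
    by (rule hoare_time_loop_free) (auto simp: inv_scan_def inv_suffix_max_def tables_ready_def input_regs_def zeroed_def)
  have A2: "hoare_time (inv_suffix_max u j (length u + 1)) (Seq (Assign ''j'' (Plus (V ''j'') (N 1))) (Assign ''jW'' (Plus (V ''jW'') (V ''W'')))) (inv_last_occ_row u (Suc j)) 2"
  proof (rule hoare_time_loop_free)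
    fix s assume I: "inv_suffix_max u j (length u + 1) s"
    then have "last_eq_filled u (arrs s ''T'') (Suc j) 0" "last_occ_filled u (arrs s ''P'') (Suc j) 0"
      using last_eq_filled_next last_occ_filled_next unfolding inv_suffix_max_def by auto
    then show "inv_last_occ_row u (Suc j) (exec (Seq (Assign ''j'' (Plus (V ''j'') (N 1))) (Assign ''jW'' (Plus (V ''jW'') (V ''W'')))) s)"
      using I unfolding inv_suffix_max_def inv_last_occ_row_def tables_ready_def input_regs_def zeroed_def by (simp add: algebra_simps)
  qed simp_all
  show "hoare_time (inv_scan u j 0) (Seq (While (Less (V ''k'') (V ''j'')) scan_body) (Seq (Assign ''v'' (V ''n''))
     (Seq (While (Less (N (-1)) (V ''v'')) suffix_max_body) (Seq (Assign ''j'' (Plus (V ''j'') (N 1))) (Assign ''jW'' (Plus (V ''jW'') (V ''W''))))))) (inv_last_occ_row u (Suc j))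
     ((j * (3 + 1) + 1) + (1 + (((length u + 1) * (3 + 1) + 1) + 2)))"
    by (rule hoare_time_Seq[OF Wk hoare_time_Seq[OF A1 hoare_time_Seq[OF Wv A2]]])
qed

definition last_occ_table :: "int list \<Rightarrow> (int \<Rightarrow> int) \<Rightarrow> bool" where
  "last_occ_table u f \<longleftrightarrow> (\<forall>j v. j \<le> length u \<longrightarrow> v \<le> length u \<longrightarrow> f (cell u j v) = int (last_occ u j v j))"

definition post_last_occ :: "int list \<Rightarrow> state \<Rightarrow> bool" where
  "post_last_occ u s \<longleftrightarrow> tables_ready u s \<and> last_occ_table u (arrs s ''P'')"

lemma prog_last_occ_correct: "hoare_time (post_reach u) prog_last_occ (post_last_occ u) (15 * (length u + 1)^2)"
proof -
  have "hoare_time (post_reach u) prog_last_occ (post_last_occ u) (2 + ((length u + 1) * ((2 + ((length u * (3 + 1) + 1) + (1 + (((length u + 1) * (3 + 1) + 1) + 2)))) + 1) + 1))"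
    unfolding prog_last_occ_def
  proof (rule hoare_time_Seq)
    show "hoare_time (post_reach u) (Seq (Assign ''j'' (N 0)) (Assign ''jW'' (N 0))) (inv_last_occ_row u 0) 2"
    proof (rule hoare_time_loop_free)
      fix s assume "post_reach u s"
      then show "inv_last_occ_row u 0 (exec (Seq (Assign ''j'' (N 0)) (Assign ''jW'' (N 0))) s)"
        by (auto simp: post_reach_def inv_last_occ_row_def tables_ready_def input_regs_def unwritten_from_last_occ_def zeroed_def last_eq_filled_def last_occ_filled_def)
    qed simp_all
    have "hoare_time (inv_last_occ_row u 0) (While (Less (V ''j'') (Plus (V ''n'') (N 1))) last_occ_row) (inv_last_occ_row u (length u + 1))
       ((length u + 1) * ((2 + ((length u * (3 + 1) + 1) + (1 + (((length u + 1) * (3 + 1) + 1) + 2)))) + 1) + 1)"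
    proof (rule hoare_time_While)
      fix m s assume "m < length u + 1" "inv_last_occ_row u m s" then show "bval (Less (V ''j'') (Plus (V ''n'') (N 1))) s"
        by (auto simp: inv_last_occ_row_def tables_ready_def input_regs_def)
    next
      fix s assume "inv_last_occ_row u (length u + 1) s" then show "\<not> bval (Less (V ''j'') (Plus (V ''n'') (N 1))) s"
        by (auto simp: inv_last_occ_row_def tables_ready_def input_regs_def)
    next
      fix m assume m: "m < length u + 1"
      show "hoare_time (inv_last_occ_row u m) last_occ_row (inv_last_occ_row u (Suc m)) (2 + ((length u * (3 + 1) + 1) + (1 + (((length u + 1) * (3 + 1) + 1) + 2))))"
        by (rule hoare_time_conseq[OF last_occ_row_correct[OF m]]) (use m in auto)
    qed
    then show "hoare_time (inv_last_occ_row u 0) (While (Less (V ''j'') (Plus (V ''n'') (N 1))) last_occ_row) (post_last_occ u)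
       ((length u + 1) * ((2 + ((length u * (3 + 1) + 1) + (1 + (((length u + 1) * (3 + 1) + 1) + 2)))) + 1) + 1)"
      by (rule hoare_time_conseq) (auto simp: inv_last_occ_row_def post_last_occ_def last_occ_table_def last_occ_filled_def)
  qed
  then show ?thesis by (rule hoare_time_conseq) (auto simp: power2_eq_square algebra_simps)
qed

text \<open>For each length l and j = 0, ..., n - l: C[j] records left_covered u j l, evaluated by
  left_covered_iff_reach; cur becomes cover_reach u l (j + 1); and Seed[j + l] is set to l if it
  is still 0 and j + l \<le> cur (seed_upto_step_cover_reach).\<close>

definition cover_step :: com where
  "cover_step = Seq (Assign ''pv'' (Arr ''P'' (Plus (V ''jW'') (V ''l''))))
     (If (Eq (V ''j'') (N 0)) (ArrAssign ''C'' (V ''j'') (N 1))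
       (If (Less (Arr ''R'' (Plus (V ''jW'') (V ''l''))) (Plus (V ''j'') (V ''l'')))
          (If (And (Less (N 0) (V ''pv'')) (And (Less (V ''j'') (Plus (V ''pv'') (V ''l''))) (Eq (Arr ''C'' (Minus (V ''pv'') (N 1))) (N 1))))
              (ArrAssign ''C'' (V ''j'') (N 1)) (ArrAssign ''C'' (V ''j'') (N 0)))
          (ArrAssign ''C'' (V ''j'') (N 1))))"

definition reach_step :: com where
  "reach_step = If (And (Eq (Arr ''C'' (V ''j'')) (N 1)) (Less (V ''cur'') (Arr ''A'' (Plus (V ''jW'') (V ''l'')))))
     (Assign ''cur'' (Arr ''A'' (Plus (V ''jW'') (V ''l'')))) SKIP"

definition record_step :: com where
  "record_step = Seq (If (And (Not (Less (V ''cur'') (Plus (V ''j'') (V ''l'')))) (Eq (Arr ''Seed'' (Plus (V ''j'') (V ''l''))) (N 0)))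
        (ArrAssign ''Seed'' (Plus (V ''j'') (V ''l'')) (V ''l'')) SKIP)
     (Seq (Assign ''j'' (Plus (V ''j'') (N 1))) (Assign ''jW'' (Plus (V ''jW'') (V ''W''))))"

definition sweep_loop :: com where
  "sweep_loop = While (Less (V ''j'') (Plus (Minus (V ''n'') (V ''l'')) (N 1))) (Seq cover_step (Seq reach_step record_step))"

definition sweep_length :: com where
  "sweep_length = Seq (Seq (Assign ''j'' (N 0)) (Seq (Assign ''jW'' (N 0)) (Assign ''cur'' (N 0))))
     (Seq sweep_loop (Assign ''l'' (Plus (V ''l'') (N 1))))"

definition prog_sweep :: com where
  "prog_sweep = Seq (Assign ''l'' (N 1)) (While (Less (V ''l'') (Plus (V ''n'') (N 1))) sweep_length)"

definition sweep_tables :: "int list \<Rightarrow> state \<Rightarrow> bool" where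
  "sweep_tables u s \<longleftrightarrow> input_regs u s \<and> table_of u (border_reach u) (arrs s ''R'') \<and> table_of u (period_reach u) (arrs s ''A'') \<and> last_occ_table u (arrs s ''P'')"

definition cover_filled :: "int list \<Rightarrow> (int \<Rightarrow> int) \<Rightarrow> nat \<Rightarrow> nat \<Rightarrow> bool" where
  "cover_filled u f l j \<longleftrightarrow> (\<forall>j'<j. f (int j') = (if left_covered u j' l then 1 else 0))"

definition seed_filled :: "int list \<Rightarrow> (int \<Rightarrow> int) \<Rightarrow> nat \<Rightarrow> nat \<Rightarrow> bool" where
  "seed_filled u f l t \<longleftrightarrow> (\<forall>i. 1 \<le> i \<longrightarrow> i \<le> length u \<longrightarrow> f (int i) = int (seed_upto u i (if i < t then l else l - 1)))"

definition inv_sweep :: "int list \<Rightarrow> nat \<Rightarrow> nat \<Rightarrow> nat \<Rightarrow> nat \<Rightarrow> state \<Rightarrow> bool" where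
  "inv_sweep u l j c mm s \<longleftrightarrow> sweep_tables u s \<and> vars s ''l'' = int l \<and> vars s ''j'' = int j \<and> vars s ''jW'' = int j * width u \<and>
     vars s ''cur'' = int (cover_reach u l mm) \<and> cover_filled u (arrs s ''C'') l c \<and> seed_filled u (arrs s ''Seed'') l (j + l)"

lemma seed_filled_step:
  "seed_filled u f l (j + l) \<Longrightarrow> seed_filled u (f(int (j + l) := int (seed_upto u (j + l) l))) l (Suc j + l)"
  unfolding seed_filled_def
proof (intro allI impI)
  fix i assume "\<forall>i. 1 \<le> i \<longrightarrow> i \<le> length u \<longrightarrow> f (int i) = int (seed_upto u i (if i < j + l then l else l - 1))"
    "1 \<le> i" "i \<le> length u"
  then show "(f(int (j + l) := int (seed_upto u (j + l) l))) (int i) =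
      int (seed_upto u i (if i < Suc j + l then l else l - 1))"
    by (cases "i = j + l") auto
qed

lemma cover_step_correct:
  assumes jl: "j + l \<le> length u" and l0: "0 < l"
  shows "hoare_time (inv_sweep u l j j j) cover_step (inv_sweep u l j (Suc j) j) 5"
proof (rule hoare_time_loop_free)
  show "loop_free cover_step" by (simp add: cover_step_def)
  show "time_bound cover_step \<le> 5" by (simp add: cover_step_def)
next
  fix s assume I: "inv_sweep u l j j j s"
  have vj: "vars s ''j'' = int j" and vjW: "vars s ''jW'' = int j * width u" and vl: "vars s ''l'' = int l"
    and Rt: "table_of u (border_reach u) (arrs s ''R'')" and Pt: "last_occ_table u (arrs s ''P'')" and Cd: "cover_filled u (arrs s ''C'') l j"
    using I unfolding inv_sweep_def sweep_tables_def by auto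
  define pv where "pv = last_occ u j l j"
  have cell_eq: "int j * width u + int l = cell u j l" by (simp add: cell_def)
  have vP: "arrs s ''P'' (int j * width u + int l) = int pv" using Pt jl unfolding last_occ_table_def cell_eq pv_def by simp
  have vR: "arrs s ''R'' (int j * width u + int l) = int (border_reach u j l)" using Rt jl unfolding table_of_def cell_eq by simp
  have crec: "left_covered u j l \<longleftrightarrow> (j = 0 \<or> j + l \<le> border_reach u j l) \<or> (0 < pv \<and> j < pv + l \<and> left_covered u (pv - 1) l)"
    using left_covered_iff_reach[OF jl l0] unfolding pv_def by blast
  have eC: "arrs (exec cover_step s) ''C'' = (arrs s ''C'')(int j := (if left_covered u j l then 1 else 0))"
  proof (cases "j = 0 \<or> j + l \<le> border_reach u j l")
    case True
    then have "left_covered u j l" using crec by simp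
    then show ?thesis unfolding cover_step_def using True vj vjW vl vP vR by auto
  next
    case False
    then have cv: "left_covered u j l \<longleftrightarrow> (0 < pv \<and> j < pv + l \<and> left_covered u (pv - 1) l)" using crec by simp
    have c3: "(0 < int pv \<and> int j < int pv + int l \<and> arrs s ''C'' (int pv - 1) = 1) \<longleftrightarrow> left_covered u j l"
    proof (cases "0 < pv")
      case True
      have "pv - 1 < j" using last_occ_pos[of u j l j] True unfolding pv_def by auto
      then have "arrs s ''C'' (int (pv - 1)) = (if left_covered u (pv - 1) l then 1 else 0)" using Cd unfolding cover_filled_def by simp
      moreover have "int (pv - 1) = int pv - 1" using True by simp
      ultimately show ?thesis using cv True by auto
    next
      case False then show ?thesis using cv by simp
    qed
    show ?thesis unfolding cover_step_def using False vj vjW vl vP vR c3 by auto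
  qed
  have eo: "\<And>X. X \<noteq> ''C'' \<Longrightarrow> arrs (exec cover_step s) X = arrs s X"
    unfolding cover_step_def by auto
  have ev: "\<And>x. x \<noteq> ''pv'' \<Longrightarrow> vars (exec cover_step s) x = vars s x"
    unfolding cover_step_def by auto
  have Cd2: "cover_filled u ((arrs s ''C'')(int j := (if left_covered u j l then 1 else 0))) l (Suc j)"
    using Cd unfolding cover_filled_def by (auto simp: less_Suc_eq)
  show "inv_sweep u l j (Suc j) j (exec cover_step s)"
    using I Cd2 unfolding inv_sweep_def sweep_tables_def input_regs_def by (simp add: eC eo ev)
qed

lemma reach_step_correct:
  assumes jl: "j + l \<le> length u"
  shows "hoare_time (inv_sweep u l j (Suc j) j) reach_step (inv_sweep u l j (Suc j) (Suc j)) 6"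
proof (rule hoare_time_loop_free)
  show "loop_free reach_step" by (simp add: reach_step_def)
  show "time_bound reach_step \<le> 6" by (simp add: reach_step_def)
next
  fix s assume I: "inv_sweep u l j (Suc j) j s"
  have vj: "vars s ''j'' = int j" and vjW: "vars s ''jW'' = int j * width u" and vl: "vars s ''l'' = int l"
    and vc: "vars s ''cur'' = int (cover_reach u l j)"
    and At: "table_of u (period_reach u) (arrs s ''A'')" and Cd: "cover_filled u (arrs s ''C'') l (Suc j)"
    using I unfolding inv_sweep_def sweep_tables_def by auto
  have cell_eq: "int j * width u + int l = cell u j l" by (simp add: cell_def)
  have vA: "arrs s ''A'' (int j * width u + int l) = int (period_reach u j l)" using At jl unfolding table_of_def cell_eq by simp
  have vC: "arrs s ''C'' (int j) = (if left_covered u j l then 1 else 0)" using Cd unfolding cover_filled_def by simp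
  have ecur: "vars (exec reach_step s) ''cur'' = int (cover_reach u l (Suc j))"
    unfolding reach_step_def using vj vjW vl vc vA vC by (auto simp: max_def)
  have eo: "arrs (exec reach_step s) = arrs s"
    unfolding reach_step_def by auto
  have ev: "\<And>x. x \<noteq> ''tmp'' \<Longrightarrow> x \<noteq> ''cur'' \<Longrightarrow> vars (exec reach_step s) x = vars s x"
    unfolding reach_step_def by auto
  show "inv_sweep u l j (Suc j) (Suc j) (exec reach_step s)"
    using I unfolding inv_sweep_def sweep_tables_def input_regs_def by (simp add: ecur eo ev del: cover_reach.simps)
qed

lemma record_step_correct:
  assumes jl: "j + l \<le> length u" and l0: "0 < l"
  shows "hoare_time (inv_sweep u l j (Suc j) (Suc j)) record_step (inv_sweep u l (Suc j) (Suc j) (Suc j)) 4"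
proof (rule hoare_time_loop_free)
  show "loop_free record_step" by (simp add: record_step_def)
  show "time_bound record_step \<le> 4" by (simp add: record_step_def)
next
  fix s assume I: "inv_sweep u l j (Suc j) (Suc j) s"
  have vj: "vars s ''j'' = int j" and vjW: "vars s ''jW'' = int j * width u" and vl: "vars s ''l'' = int l"
    and vc: "vars s ''cur'' = int (cover_reach u l (Suc j))" and vW: "vars s ''W'' = width u"
    and Sd: "seed_filled u (arrs s ''Seed'') l (j + l)"
    using I unfolding inv_sweep_def sweep_tables_def input_regs_def by auto
  define i where "i = j + l"
  have i1: "1 \<le> i" "i \<le> length u" using jl l0 unfolding i_def by auto
  have nl: "\<not> i < j + l" by (simp add: i_def)
  have vS: "arrs s ''Seed'' (int i) = int (seed_upto u i (l - 1))" using Sd[unfolded seed_filled_def, rule_format, OF i1] nl by simp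
  have st: "seed_upto u i l = (if seed_upto u i (l - 1) \<noteq> 0 then seed_upto u i (l - 1)
      else if i \<le> cover_reach u l (Suc j) then l else 0)"
    unfolding i_def by (rule seed_upto_step_cover_reach[OF jl l0])
  have eS: "arrs (exec record_step s) ''Seed'' = (arrs s ''Seed'')(int i := int (seed_upto u i l))"
  proof (cases "seed_upto u i (l - 1) = 0 \<and> i \<le> cover_reach u l (Suc j)")
    case True
    then have "seed_upto u i l = l" using st by simp
    then show ?thesis unfolding record_step_def using True vj vl vc vS unfolding i_def by auto
  next
    case False
    then have e: "seed_upto u i l = seed_upto u i (l - 1)" using st by auto
    have "arrs (exec record_step s) ''Seed'' = arrs s ''Seed''"
      unfolding record_step_def using False vj vl vc vS unfolding i_def by auto
    then show ?thesis using e vS by auto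
  qed
  have eo: "\<And>X. X \<noteq> ''Seed'' \<Longrightarrow> arrs (exec record_step s) X = arrs s X"
    unfolding record_step_def by auto
  have ev: "\<And>x. x \<noteq> ''j'' \<Longrightarrow> x \<noteq> ''jW'' \<Longrightarrow> vars (exec record_step s) x = vars s x"
    unfolding record_step_def by auto
  have evj: "vars (exec record_step s) ''j'' = vars s ''j'' + 1" "vars (exec record_step s) ''jW'' = vars s ''jW'' + vars s ''W''"
    unfolding record_step_def by auto
  have Sd2: "seed_filled u ((arrs s ''Seed'')(int i := int (seed_upto u i l))) l (Suc j + l)"
    using seed_filled_step[OF Sd] unfolding i_def .
  show "inv_sweep u l (Suc j) (Suc j) (Suc j) (exec record_step s)"
    using I Sd2 vj vjW vW unfolding inv_sweep_def sweep_tables_def input_regs_def by (simp add: eS eo ev evj algebra_simps del: cover_reach.simps)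
qed

lemma sweep_body_correct:
  assumes jl: "j + l \<le> length u" and l0: "0 < l"
  shows "hoare_time (inv_sweep u l j j j) (Seq cover_step (Seq reach_step record_step)) (inv_sweep u l (Suc j) (Suc j) (Suc j)) (5 + (6 + 4))"
  by (rule hoare_time_Seq[OF cover_step_correct[OF jl l0] hoare_time_Seq[OF reach_step_correct[OF jl] record_step_correct[OF jl l0]]])

lemma sweep_loop_correct:
  assumes l: "l \<le> length u" and l0: "0 < l"
  shows "hoare_time (inv_sweep u l 0 0 0) sweep_loop (inv_sweep u l (length u - l + 1) (length u - l + 1) (length u - l + 1))
     ((length u + 1) * 16 + 1)"
proof -
  have "hoare_time (\<lambda>s. inv_sweep u l 0 0 0 s) sweep_loop (\<lambda>s. inv_sweep u l (length u - l + 1) (length u - l + 1) (length u - l + 1) s)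
     ((length u - l + 1) * ((5 + (6 + 4)) + 1) + 1)"
    unfolding sweep_loop_def
  proof (rule hoare_time_While[where I = "\<lambda>j s. inv_sweep u l j j j s"])
    fix m s assume "m < length u - l + 1" "inv_sweep u l m m m s"
    then show "bval (Less (V ''j'') (Plus (Minus (V ''n'') (V ''l'')) (N 1))) s"
      using l by (auto simp: inv_sweep_def sweep_tables_def input_regs_def)
  next
    fix s assume "inv_sweep u l (length u - l + 1) (length u - l + 1) (length u - l + 1) s"
    then show "\<not> bval (Less (V ''j'') (Plus (Minus (V ''n'') (V ''l'')) (N 1))) s"
      using l by (auto simp: inv_sweep_def sweep_tables_def input_regs_def)
  next
    fix m assume "m < length u - l + 1"
    then have "m + l \<le> length u" using l by simp
    then show "hoare_time (inv_sweep u l m m m) (Seq cover_step (Seq reach_step record_step)) (inv_sweep u l (Suc m) (Suc m) (Suc m)) (5 + (6 + 4))"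
      by (rule sweep_body_correct[OF _ l0])
  qed
  then show ?thesis by (rule hoare_time_conseq) (use l in auto)
qed

definition inv_sweep_length :: "int list \<Rightarrow> nat \<Rightarrow> state \<Rightarrow> bool" where
  "inv_sweep_length u m s \<longleftrightarrow> sweep_tables u s \<and> vars s ''l'' = int (Suc m) \<and> seed_filled u (arrs s ''Seed'') (Suc m) 0"

lemma sweep_length_correct:
  assumes m: "m < length u"
  shows "hoare_time (inv_sweep_length u m) sweep_length (inv_sweep_length u (Suc m)) (3 + (((length u + 1) * 16 + 1) + 1))"
  unfolding sweep_length_def
proof (rule hoare_time_Seq)
  show "hoare_time (inv_sweep_length u m) (Seq (Assign ''j'' (N 0)) (Seq (Assign ''jW'' (N 0)) (Assign ''cur'' (N 0)))) (inv_sweep u (Suc m) 0 0 0) 3"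
  proof (rule hoare_time_loop_free)
    fix s assume I: "inv_sweep_length u m s"
    have "seed_filled u (arrs s ''Seed'') (Suc m) (0 + Suc m)"
      using I unfolding inv_sweep_length_def seed_filled_def using seed_upto_below[of _ u "Suc m"] by auto
    then show "inv_sweep u (Suc m) 0 0 0 (exec (Seq (Assign ''j'' (N 0)) (Seq (Assign ''jW'' (N 0)) (Assign ''cur'' (N 0)))) s)"
      using I unfolding inv_sweep_length_def inv_sweep_def sweep_tables_def input_regs_def cover_filled_def by simp
  qed simp_all
  show "hoare_time (inv_sweep u (Suc m) 0 0 0) (Seq sweep_loop (Assign ''l'' (Plus (V ''l'') (N 1)))) (inv_sweep_length u (Suc m)) (((length u + 1) * 16 + 1) + 1)"
  proof (rule hoare_time_Seq[OF sweep_loop_correct])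
    show "Suc m \<le> length u" "0 < Suc m" using m by auto
    show "hoare_time (inv_sweep u (Suc m) (length u - Suc m + 1) (length u - Suc m + 1) (length u - Suc m + 1)) (Assign ''l'' (Plus (V ''l'') (N 1))) (inv_sweep_length u (Suc m)) 1"
    proof (rule hoare_time_loop_free)
      fix s assume I: "inv_sweep u (Suc m) (length u - Suc m + 1) (length u - Suc m + 1) (length u - Suc m + 1) s"
      have "seed_filled u (arrs s ''Seed'') (Suc (Suc m)) 0"
        using I m unfolding inv_sweep_def seed_filled_def by auto
      then show "inv_sweep_length u (Suc m) (exec (Assign ''l'' (Plus (V ''l'') (N 1))) s)"
        using I unfolding inv_sweep_length_def inv_sweep_def sweep_tables_def input_regs_def by simp
    qed simp_all
  qed
qed

definition seeds_computed :: "int list \<Rightarrow> state \<Rightarrow> bool" where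
  "seeds_computed u s \<longleftrightarrow> (\<forall>i. 1 \<le> i \<and> i \<le> length u \<longrightarrow> arrs s ''Seed'' (int i) = int (seed_array u i))"

lemma prog_sweep_correct: "hoare_time (post_last_occ u) prog_sweep (seeds_computed u) (24 * (length u + 1)^2)"
proof -
  have "hoare_time (post_last_occ u) prog_sweep (seeds_computed u) (1 + (length u * ((3 + (((length u + 1) * 16 + 1) + 1)) + 1) + 1))"
    unfolding prog_sweep_def
  proof (rule hoare_time_Seq)
    show "hoare_time (post_last_occ u) (Assign ''l'' (N 1)) (inv_sweep_length u 0) 1"
    proof (rule hoare_time_loop_free)
      fix s assume "post_last_occ u s"
      then show "inv_sweep_length u 0 (exec (Assign ''l'' (N 1)) s)"
        by (auto simp: post_last_occ_def tables_ready_def inv_sweep_length_def sweep_tables_def input_regs_def zeroed_def seed_filled_def seed_upto_0)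
    qed simp_all
    have "hoare_time (inv_sweep_length u 0) (While (Less (V ''l'') (Plus (V ''n'') (N 1))) sweep_length) (inv_sweep_length u (length u))
       (length u * ((3 + (((length u + 1) * 16 + 1) + 1)) + 1) + 1)"
    proof (rule hoare_time_While)
      fix m s assume "m < length u" "inv_sweep_length u m s" then show "bval (Less (V ''l'') (Plus (V ''n'') (N 1))) s"
        by (auto simp: inv_sweep_length_def sweep_tables_def input_regs_def)
    next
      fix s assume "inv_sweep_length u (length u) s" then show "\<not> bval (Less (V ''l'') (Plus (V ''n'') (N 1))) s"
        by (auto simp: inv_sweep_length_def sweep_tables_def input_regs_def)
    next
      fix m assume "m < length u" then show "hoare_time (inv_sweep_length u m) sweep_length (inv_sweep_length u (Suc m)) (3 + (((length u + 1) * 16 + 1) + 1))"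
        by (rule sweep_length_correct)
    qed
    then show "hoare_time (inv_sweep_length u 0) (While (Less (V ''l'') (Plus (V ''n'') (N 1))) sweep_length) (seeds_computed u)
       (length u * ((3 + (((length u + 1) * 16 + 1) + 1)) + 1) + 1)"
    proof (rule hoare_time_conseq)
      fix s assume I: "inv_sweep_length u (length u) s"
      show "seeds_computed u s" unfolding seeds_computed_def
      proof (intro allI impI)
        fix i assume i: "1 \<le> i \<and> i \<le> length u"
        have "arrs s ''Seed'' (int i) = int (seed_upto u i (length u))" using I i unfolding inv_sweep_length_def seed_filled_def by auto
        also have "seed_upto u i (length u) = seed_array u i" using seed_upto_full[of i u "length u"] i by simp
        finally show "arrs s ''Seed'' (int i) = int (seed_array u i)" by simp
      qed
    qed auto
  qed
  then show ?thesis by (rule hoare_time_conseq) (auto simp: power2_eq_square algebra_simps)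
qed

definition seed_prog :: com where "seed_prog = Seq prog_init (Seq prog_lce (Seq prog_reach (Seq prog_last_occ prog_sweep)))"

lemma seed_prog_correct: "hoare_time (\<lambda>s. s = init_state u) seed_prog (seeds_computed u) (78 * (length u + 1)^2)"
proof -
  have "hoare_time (\<lambda>s. s = init_state u) seed_prog (seeds_computed u)
      (4 * (length u + 1)^2 + (13 * (length u + 1)^2 + (22 * (length u + 1)^2 +
        (15 * (length u + 1)^2 + 24 * (length u + 1)^2))))"
    unfolding seed_prog_def
    by (rule hoare_time_Seq[OF prog_init_correct hoare_time_Seq[OF prog_lce_correct
          hoare_time_Seq[OF prog_reach_correct hoare_time_Seq[OF prog_last_occ_correct prog_sweep_correct]]]])
  then show ?thesis by (rule hoare_time_conseq) auto
qed

theorem theorem5: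
  "\<exists>(P :: com) (c :: nat). \<forall>u :: int list.
     \<exists>t s'. big_step P (init_state u) t s' \<and>
       t \<le> c * (length u + 1)^2 \<and>
       (\<forall>i. 1 \<le> i \<and> i \<le> length u \<longrightarrow> arrs s' ''Seed'' (int i) = int (seed_array u i))"
proof (rule exI[of _ seed_prog], rule exI[of _ 78], rule allI)
  fix u :: "int list"
  from seed_prog_correct[of u] show "\<exists>t s'. big_step seed_prog (init_state u) t s' \<and> t \<le> 78 * (length u + 1)^2 \<and>
       (\<forall>i. 1 \<le> i \<and> i \<le> length u \<longrightarrow> arrs s' ''Seed'' (int i) = int (seed_array u i))"
    unfolding hoare_time_def seeds_computed_def by auto
qed

end
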